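(* Let $u$ and $v$ be two prime words such that $u\le_{lex}v$, and let $\alpha$ and $\beta$ be two non-zero ordinals. Then $u^\alpha v^\beta=w^\gamma$ for some prime word $w$ and some ordinal $\gamma$, where either $w=v$ and $\gamma\in\{\beta,\alpha+\beta\}$, or $w=u^\alpha v^\beta$ and $\gamma=1$.
   Context: $A$ is a finite alphabet with a linear order $<_A$. Words are sequences of letters indexed by countable ordinals, $x^\alpha$ is the concatenation of $\alpha$ copies of $x$. A suffix of $x$ is $x[\gamma,|x|)$, proper if $0<\gamma<|x|$. Write $x<_{str}x'$ if there are letters $a<_Ab$ and words $y,z,z'$ with $x=yaz$, $x'=ybz'$; $x\le_{lex}x'$ iff $x$ is a prefix of $x'$ or $x<_{str}x'$. A word is primitive if $x=y^\alpha$ implies $\alpha=1$ and $y=x$; $w$ is prime if it is primitive and every proper suffix $z$ satisfies $w\le_{lex}z$. *)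

theory Defs
  imports Main "HOL-Library.Nat_Bijection"
begin

text \<open>Countable ordinals are represented by well-orders whose field is a subset of nat
 (every countable ordinal arises this way); ordinal equality is order isomorphism.
 Words of countable length are labelled well-orders on subsets of nat:
 a pair (r, f) with r a well-order and f the labelling of positions in Field r;
 word equality is isomorphism of labelled well-orders.\<close>

type_synonym 'a word = "nat rel \<times> (nat \<Rightarrow> 'a)"

definition is_word :: "'a word \<Rightarrow> bool" where
  "is_word x \<longleftrightarrow> Well_order (fst x)"

definition word_iso :: "'a word \<Rightarrow> 'a word \<Rightarrow> bool" where
  "word_iso x y \<longleftrightarrow> (\<exists>f. bij_betw f (Field (fst x)) (Field (fst y))
     \<and> (\<forall>i\<in>Field (fst x). \<forall>j\<in>Field (fst x). (i, j) \<in> fst x \<longleftrightarrow> (f i, f j) \<in> fst y)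
     \<and> (\<forall>i\<in>Field (fst x). snd y (f i) = snd x i))"

definition is_ord :: "nat rel \<Rightarrow> bool" where
  "is_ord \<alpha> \<longleftrightarrow> Well_order \<alpha>"

definition ord_eq :: "nat rel \<Rightarrow> nat rel \<Rightarrow> bool" where
  "ord_eq \<alpha> \<beta> \<longleftrightarrow> word_iso (\<alpha>, \<lambda>_. ()) (\<beta>, \<lambda>_. ())"

definition ord_one :: "nat rel" where
  "ord_one = {(0, 0)}"

definition rsum :: "nat rel \<Rightarrow> nat rel \<Rightarrow> nat rel" where
  "rsum r s =
     {(sum_encode (Inl i), sum_encode (Inl j)) | i j. (i, j) \<in> r}
   \<union> {(sum_encode (Inr i), sum_encode (Inr j)) | i j. (i, j) \<in> s}
   \<union> {(sum_encode (Inl i), sum_encode (Inr j)) | i j. i \<in> Field r \<and> j \<in> Field s}"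

definition ord_add :: "nat rel \<Rightarrow> nat rel \<Rightarrow> nat rel" where
  "ord_add \<alpha> \<beta> = rsum \<alpha> \<beta>"

definition conc :: "'a word \<Rightarrow> 'a word \<Rightarrow> 'a word" where
  "conc x y = (rsum (fst x) (fst y),
     \<lambda>n. case sum_decode n of Inl i \<Rightarrow> snd x i | Inr j \<Rightarrow> snd y j)"

definition letter :: "'a \<Rightarrow> 'a word" where
  "letter a = ({(0, 0)}, \<lambda>_. a)"

text \<open>x^\<alpha>: concatenation of \<alpha> copies of x (copy index is the major key).\<close>
definition wpow :: "'a word \<Rightarrow> nat rel \<Rightarrow> 'a word" where
  "wpow x \<alpha> =
     ({(prod_encode (i, b), prod_encode (j, c)) | i j b c.
         i \<in> Field (fst x) \<and> j \<in> Field (fst x) \<and> b \<in> Field \<alpha> \<and> c \<in> Field \<alpha> \<and>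
         (((b, c) \<in> \<alpha> \<and> b \<noteq> c) \<or> (b = c \<and> (i, j) \<in> fst x))},
      \<lambda>n. snd x (fst (prod_decode n)))"

text \<open>Proper suffix x[g,|x|) with 0 < g < |x|: g a position of x which is not the first one.\<close>
definition proper_suffix :: "'a word \<Rightarrow> 'a word \<Rightarrow> bool" where
  "proper_suffix z x \<longleftrightarrow> (\<exists>g\<in>Field (fst x).
      (\<exists>i\<in>Field (fst x). (i, g) \<in> fst x \<and> i \<noteq> g) \<and>
      word_iso z (Restr (fst x) {j \<in> Field (fst x). (g, j) \<in> fst x}, snd x))"

definition is_prefix :: "'a word \<Rightarrow> 'a word \<Rightarrow> bool" where
  "is_prefix x x' \<longleftrightarrow> (\<exists>z. is_word z \<and> word_iso x' (conc x z))"

definition str_less :: "'a::linorder word \<Rightarrow> 'a word \<Rightarrow> bool" where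
  "str_less x x' \<longleftrightarrow> (\<exists>a b y z z'. a < b \<and> is_word y \<and> is_word z \<and> is_word z' \<and>
      word_iso x (conc y (conc (letter a) z)) \<and> word_iso x' (conc y (conc (letter b) z')))"

definition lex_le :: "'a::linorder word \<Rightarrow> 'a word \<Rightarrow> bool" where
  "lex_le x x' \<longleftrightarrow> is_prefix x x' \<or> str_less x x'"

definition primitive :: "'a word \<Rightarrow> bool" where
  "primitive x \<longleftrightarrow> is_word x \<and> (\<forall>y \<alpha>. is_word y \<and> is_ord \<alpha> \<and> word_iso x (wpow y \<alpha>)
      \<longrightarrow> ord_eq \<alpha> ord_one \<and> word_iso y x)"

definition prime_word :: "'a::linorder word \<Rightarrow> bool" where
  "prime_word w \<longleftrightarrow> primitive w \<and> (\<forall>z. proper_suffix z w \<longrightarrow> lex_le w z)"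

end

theory Submission
  imports Defs
begin

text \<open>If \<open>u \<cong> v\<close> then \<open>u\<^sup>\<alpha> v\<^sup>\<beta> \<cong> v\<^sup>\<alpha>\<^sup>+\<^sup>\<beta>\<close>. Otherwise \<open>v\<close> is compared with the power \<open>u\<^bsup>|v|\<^esub>\<close>,
  which is at least as long as \<open>v\<close>: primality of \<open>u\<close> and \<open>v\<close> rules out every outcome except
  \<open>u\<^bsup>|v|\<^esub> < v\<close> strictly, and the first difference yields \<open>v \<cong> u\<^sup>\<eta> x\<close> with \<open>u\<close> strictly below \<open>x\<close>.
  Then \<open>u\<^sup>\<alpha> v\<^sup>\<beta> \<cong> u\<^bsup>\<alpha>+\<eta>\<^esub> x \<dots>\<close>. If \<open>\<alpha> + \<eta> = \<eta>\<close>, the factor \<open>u\<^sup>\<alpha>\<close> is absorbed and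
  \<open>u\<^sup>\<alpha> v\<^sup>\<beta> \<cong> v\<^sup>\<beta>\<close>. If \<open>\<eta> < \<alpha> + \<eta>\<close>, then, since \<open>u\<^sup>\<tau> x t\<close> is strictly below \<open>u\<^sup>\<sigma> x t'\<close> whenever
  \<open>\<sigma> < \<tau>\<close>, every proper suffix of \<open>w = u\<^sup>\<alpha> v\<^sup>\<beta>\<close> is isomorphic to \<open>w\<close> or strictly above it,
  and strictly above it once it starts inside \<open>v\<^sup>\<beta>\<close>; this makes \<open>w\<close> primitive, hence prime.\<close>

unbundle cardinal_syntax

abbreviation inl_pos :: "nat \<Rightarrow> nat" where "inl_pos i \<equiv> sum_encode (Inl i)"
abbreviation inr_pos :: "nat \<Rightarrow> nat" where "inr_pos i \<equiv> sum_encode (Inr i)"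

text \<open>\<open>pow_pos i b\<close> is position \<open>i\<close> of the \<open>b\<close>-th copy of \<open>x\<close> in \<open>wpow x \<alpha>\<close>.\<close>

abbreviation pow_pos :: "nat \<Rightarrow> nat \<Rightarrow> nat" where "pow_pos i b \<equiv> prod_encode (i, b)"

definition restr_word :: "'a word \<Rightarrow> nat set \<Rightarrow> 'a word" where
  "restr_word x S = (Restr (fst x) S, snd x)"

abbreviation pos :: "'a word \<Rightarrow> nat set" where "pos x \<equiv> Field (fst x)"

abbreviation wo_word :: "'a word \<Rightarrow> bool" where "wo_word x \<equiv> Well_order (fst x)"

lemma inl_pos_eq[simp]: "inl_pos i = inl_pos j \<longleftrightarrow> i = j" by (simp add: sum_encode_eq)
lemma inr_pos_eq[simp]: "inr_pos i = inr_pos j \<longleftrightarrow> i = j" by (simp add: sum_encode_eq)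
lemma inl_pos_neq_inr_pos[simp]: "inl_pos i \<noteq> inr_pos j" "inr_pos j \<noteq> inl_pos i"
  by (simp_all add: sum_encode_eq)

lemma sum_code_cases:
  obtains i where "n = inl_pos i" | j where "n = inr_pos j"
  by (cases "sum_decode n") (metis sum_decode_inverse)+

lemma prod_code_cases:
  obtains i b where "n = pow_pos i b"
  by (metis prod_decode_inverse surj_pair)

lemma rsum_inl_inl[simp]: "(inl_pos i, inl_pos j) \<in> rsum r s \<longleftrightarrow> (i,j) \<in> r"
  by (auto simp: rsum_def sum_encode_eq)
lemma rsum_inr_inr[simp]: "(inr_pos i, inr_pos j) \<in> rsum r s \<longleftrightarrow> (i,j) \<in> s"
  by (auto simp: rsum_def sum_encode_eq)
lemma rsum_inl_inr[simp]: "(inl_pos i, inr_pos j) \<in> rsum r s \<longleftrightarrow> i \<in> Field r \<and> j \<in> Field s"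
  by (auto simp: rsum_def sum_encode_eq)
lemma rsum_inr_inl[simp]: "(inr_pos i, inl_pos j) \<notin> rsum r s"
  by (auto simp: rsum_def sum_encode_eq)

lemma Field_rsum: "Field (rsum r s) = inl_pos ` Field r \<union> inr_pos ` Field s"
proof (rule set_eqI)
  fix n show "n \<in> Field (rsum r s) \<longleftrightarrow> n \<in> inl_pos ` Field r \<union> inr_pos ` Field s"
  proof (cases n rule: sum_code_cases)
    case (1 i)
    have "inl_pos i \<in> Field (rsum r s) \<longleftrightarrow> i \<in> Field r"
    proof
      assume "inl_pos i \<in> Field (rsum r s)"
      then obtain m where "(inl_pos i, m) \<in> rsum r s \<or> (m, inl_pos i) \<in> rsum r s"
        unfolding Field_def by blast
      then show "i \<in> Field r"
        by (cases m rule: sum_code_cases) (auto intro: FieldI1 FieldI2)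
    next
      assume "i \<in> Field r"
      then obtain m where "(i, m) \<in> r \<or> (m, i) \<in> r" unfolding Field_def by blast
      then show "inl_pos i \<in> Field (rsum r s)"
        by (metis FieldI1 FieldI2 rsum_inl_inl)
    qed
    then show ?thesis using 1 by auto
  next
    case (2 j)
    have "inr_pos j \<in> Field (rsum r s) \<longleftrightarrow> j \<in> Field s"
    proof
      assume "inr_pos j \<in> Field (rsum r s)"
      then obtain m where "(inr_pos j, m) \<in> rsum r s \<or> (m, inr_pos j) \<in> rsum r s"
        unfolding Field_def by blast
      then show "j \<in> Field s"
        by (cases m rule: sum_code_cases) (auto intro: FieldI1 FieldI2)
    next
      assume "j \<in> Field s"
      then obtain m where "(j, m) \<in> s \<or> (m, j) \<in> s" unfolding Field_def by blast
      then show "inr_pos j \<in> Field (rsum r s)"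
        by (metis FieldI1 FieldI2 rsum_inr_inr)
    qed
    then show ?thesis using 2 by auto
  qed
qed

lemma conc_fst[simp]: "fst (conc x y) = rsum (fst x) (fst y)" by (simp add: conc_def)
lemma conc_label_inl[simp]: "snd (conc x y) (inl_pos i) = snd x i" by (simp add: conc_def)
lemma conc_label_inr[simp]: "snd (conc x y) (inr_pos i) = snd y i" by (simp add: conc_def)

lemma wpow_order_iff[simp]: "(pow_pos i b, pow_pos j c) \<in> fst (wpow x \<alpha>) \<longleftrightarrow>
   i \<in> pos x \<and> j \<in> pos x \<and> b \<in> Field \<alpha> \<and> c \<in> Field \<alpha> \<and>
   ((b, c) \<in> \<alpha> \<and> b \<noteq> c \<or> b = c \<and> (i, j) \<in> fst x)"
  by (auto simp: wpow_def)
lemma wpow_label[simp]: "snd (wpow x \<alpha>) (pow_pos i b) = snd x i" by (simp add: wpow_def)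

lemma restr_word_fst[simp]: "fst (restr_word x S) = Restr (fst x) S" by (simp add: restr_word_def)
lemma restr_word_snd[simp]: "snd (restr_word x S) = snd x" by (simp add: restr_word_def)

section \<open>Well-orders\<close>

lemma Well_order_refl: "Well_order r \<Longrightarrow> a \<in> Field r \<Longrightarrow> (a, a) \<in> r"
  unfolding well_order_on_def linear_order_on_def partial_order_on_def preorder_on_def refl_on_def
    by blast
lemma Well_order_trans: "Well_order r \<Longrightarrow> (a, b) \<in> r \<Longrightarrow> (b, c) \<in> r \<Longrightarrow> (a, c) \<in> r"
  unfolding well_order_on_def linear_order_on_def partial_order_on_def preorder_on_def trans_def
    by blast
lemma Well_order_antisym: "Well_order r \<Longrightarrow> (a, b) \<in> r \<Longrightarrow> (b, a) \<in> r \<Longrightarrow> a = b"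
  unfolding well_order_on_def linear_order_on_def partial_order_on_def antisym_def by blast
lemma Well_order_Refl: "Well_order r \<Longrightarrow> Refl r"
  unfolding well_order_on_def linear_order_on_def partial_order_on_def preorder_on_def by blast

lemma Well_order_total: "Well_order r \<Longrightarrow> a \<in> Field r \<Longrightarrow> b \<in> Field r \<Longrightarrow> (a, b) \<in> r \<or> (b, a) \<in> r"
  using wo_rel.TOTALS[of r] unfolding wo_rel_def by blast

lemma Well_order_has_min:
  assumes w: "Well_order r" and A: "A \<subseteq> Field r" "A \<noteq> {}"
  shows "\<exists>a\<in>A. \<forall>a'\<in>A. (a, a') \<in> r"
proof -
  have l: "Linear_order r" using w unfolding well_order_on_def by (rule conjunct1)
  have "\<forall>A \<subseteq> Field r. A \<noteq> {} \<longrightarrow> (\<exists>a \<in> A. \<forall>a' \<in> A. (a, a') \<in> r)"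
    using Linear_order_Well_order_iff[OF l] w by (rule iffD1)
  then show ?thesis using A by blast
qed

lemma Well_orderI:
  assumes "\<forall>a\<in>Field r. (a,a) \<in> r" "trans r" "antisym r"
    "\<forall>a\<in>Field r. \<forall>b\<in>Field r. (a,b) \<in> r \<or> (b,a) \<in> r"
    "\<forall>A. A \<subseteq> Field r \<longrightarrow> A \<noteq> {} \<longrightarrow> (\<exists>a\<in>A. \<forall>a'\<in>A. (a,a') \<in> r)"
  shows "Well_order r"
proof -
  have "refl_on (Field r) r" using assms(1) unfolding refl_on_def by blast
  moreover have "total_on (Field r) r" using assms(4) unfolding total_on_def by blast
  moreover have "r \<subseteq> Field r \<times> Field r" by (auto intro: FieldI1 FieldI2)
  ultimately have l: "Linear_order r"
    unfolding linear_order_on_def partial_order_on_def preorder_on_def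
    using assms(2,3) by blast
  show ?thesis using Linear_order_Well_order_iff[OF l] assms(5) by blast
qed

lemma Field_Restr_Well_order: "Well_order r \<Longrightarrow> S \<subseteq> Field r \<Longrightarrow> Field (Restr r S) = S"
  using Refl_Field_Restr2 Well_order_Refl by blast

lemma wo_inflationary:
  assumes wo: "Well_order r"
    and hF: "\<And>a. a \<in> Field r \<Longrightarrow> h a \<in> Field r"
    and hm: "\<And>a b. a \<in> Field r \<Longrightarrow> b \<in> Field r \<Longrightarrow> (a, b) \<in> r \<Longrightarrow> a \<noteq> b \<Longrightarrow> (h a, h b) \<in> r \<and> h a \<noteq> h b"
    and a: "a \<in> Field r"
  shows "(a, h a) \<in> r"
proof (rule ccontr)
  assume na: "(a, h a) \<notin> r"
  define A where "A = {a\<in>Field r. (a, h a) \<notin> r}"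
  have "A \<subseteq> Field r" "A \<noteq> {}" using a na A_def by auto
  then obtain m where m: "m \<in> A" "\<forall>a'\<in>A. (m, a') \<in> r" using Well_order_has_min[OF wo] by blast
  have mF: "m \<in> Field r" and mh: "(m, h m) \<notin> r" using m A_def by auto
  have hmF: "h m \<in> Field r" using hF mF by auto
  have 1: "(h m, m) \<in> r" "h m \<noteq> m"
    using Well_order_total[OF wo mF hmF] mh Well_order_refl[OF wo mF] by auto
  have 2: "(h (h m), h m) \<in> r" "h (h m) \<noteq> h m" using hm[OF hmF mF 1] by auto
  have "(h m, h (h m)) \<notin> r" using 2 Well_order_antisym[OF wo] by blast
  then have "h m \<in> A" using A_def hmF by auto
  then have "(m, h m) \<in> r" using m by auto
  then show False using mh by simp
qed

lemma ofilter_iff: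
  "ofilter r S \<longleftrightarrow> S \<subseteq> Field r \<and> (\<forall>a\<in>S. \<forall>b. (b, a) \<in> r \<longrightarrow> b \<in> S)"
  unfolding ofilter_def under_def by blast

lemma above_eq: "above r a = {b \<in> Field r. (a, b) \<in> r}"
  unfolding above_def by (auto intro: FieldI2)

lemma ofilter_subset: "ofilter r S \<Longrightarrow> S \<subseteq> Field r"
  unfolding ofilter_def by blast

lemma ofilter_downD: "ofilter r S \<Longrightarrow> a \<in> S \<Longrightarrow> (b, a) \<in> r \<Longrightarrow> b \<in> S"
  unfolding ofilter_iff by blast

lemma underS_subset_Field: "underS r a \<subseteq> Field r"
  by (rule Order_Relation.underS_Field)

lemma above_Field: "above r p \<subseteq> Field r"
  unfolding above_eq by auto

lemma ofilter_underS: "Well_order r \<Longrightarrow> ofilter r (underS r p)"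
  using wo_rel.underS_ofilter[of r p] by (simp add: wo_rel_def)

lemma ofilter_Field: "ofilter r (Field r)"
  unfolding ofilter_iff by (auto intro: FieldI1)

lemma Well_order_minE:
  assumes r: "Well_order r" and ne: "Field r \<noteq> {}"
  obtains m where "m \<in> Field r" "\<And>a. a \<in> Field r \<Longrightarrow> (m, a) \<in> r"
  using Well_order_has_min[OF r subset_refl ne] by blast

lemma above_min: "(\<And>a. a \<in> Field r \<Longrightarrow> (m, a) \<in> r) \<Longrightarrow> above r m = Field r"
  unfolding above_eq by auto

lemma above_eq_Field:
  assumes r: "Well_order r" and j: "j \<in> Field r" and "\<not> (\<exists>i\<in>Field r. (i, j) \<in> r \<and> i \<noteq> j)"
  shows "above r j = Field r"
  using above_min[of r j] Well_order_total[OF r] j assms(3) by blast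

lemma Field_diff_underS:
  assumes r: "Well_order r" and p: "p \<in> Field r" shows "Field r - underS r p = above r p"
  using Well_order_total[OF r _ p] Well_order_refl[OF r p] Well_order_antisym[OF r]
  unfolding underS_def above_eq by blast

lemma Restr_ordLeq:
  assumes R: "Well_order R" and S: "S \<subseteq> Field R"
  shows "Restr R S \<le>o R"
proof (rule ccontr)
  have RS: "Well_order (Restr R S)" using Well_order_Restr[OF R] .
  have FRS: "Field (Restr R S) = S" using Field_Restr_Well_order[OF R S] .
  assume "\<not> Restr R S \<le>o R"
  then have "R <o Restr R S" using not_ordLeq_iff_ordLess[OF R RS] by blast
  then obtain a where a: "a \<in> Field (Restr R S)" "R =o Restr (Restr R S) (underS (Restr R S) a)"
    using ordLess_iff_ordIso_Restr[OF RS R] by blast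
  let ?T = "underS (Restr R S) a"
  obtain f where f: "iso R (Restr (Restr R S) ?T) f" using a(2) unfolding ordIso_def by blast
  have TS: "?T \<subseteq> S" using underS_subset_Field[of "Restr R S" a] FRS by simp
  have FT: "Field (Restr (Restr R S) ?T) = ?T"
    using Field_Restr_Well_order[OF RS underS_subset_Field] .
  have f2: "bij_betw f (Field R) (Field (Restr (Restr R S) ?T)) \<and>
     (\<forall>x \<in> Field R. \<forall>y \<in> Field R. (x, y) \<in> R \<longleftrightarrow> (f x, f y) \<in> Restr (Restr R S) ?T)"
    using iso_iff2[THEN iffD1, OF f] .
  have bf: "bij_betw f (Field R) ?T" using conjunct1[OF f2] FT by simp
  have fo: "\<And>x y. x \<in> Field R \<Longrightarrow> y \<in> Field R \<Longrightarrow> (x, y) \<in> R \<longleftrightarrow> (f x, f y) \<in> Restr (Restr R S) ?T"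
    using conjunct2[OF f2] by blast
  have fT: "\<And>x. x \<in> Field R \<Longrightarrow> f x \<in> ?T" using bf bij_betwE by blast
  have aS: "a \<in> S" using a(1) FRS by simp
  have aR: "a \<in> Field R" using aS S by blast
  have "(a, f a) \<in> R"
  proof (rule wo_inflationary[OF R])
    show "\<And>x. x \<in> Field R \<Longrightarrow> f x \<in> Field R" using fT TS S by blast
    fix x y assume xy: "x \<in> Field R" "y \<in> Field R" "(x, y) \<in> R" "x \<noteq> y"
    have "(f x, f y) \<in> R" using fo[OF xy(1,2)] xy(3) by simp
    moreover have "f x \<noteq> f y" using bf xy unfolding bij_betw_def inj_on_def by blast
    ultimately show "(f x, f y) \<in> R \<and> f x \<noteq> f y" by simp
  qed (rule aR)
  moreover have "(f a, a) \<in> R" "f a \<noteq> a" using fT[OF aR] unfolding underS_def by auto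
  ultimately show False using Well_order_antisym[OF R] by blast
qed

lemma ordLeq_ofilter:
  assumes g: "Well_order \<gamma>" and le: "\<rho> \<le>o \<gamma>"
  obtains J where "ofilter \<gamma> J" "\<rho> =o Restr \<gamma> J"
proof (cases "\<rho> =o \<gamma>")
  case True
  have "\<gamma> = Restr \<gamma> (Field \<gamma>)" by (simp add: Restr_Field)
  then have "\<rho> =o Restr \<gamma> (Field \<gamma>)" using True by simp
  then show ?thesis using that[of "Field \<gamma>"] ofilter_Field by blast
next
  case False
  then have "\<rho> <o \<gamma>" using le ordLeq_iff_ordLess_or_ordIso by blast
  moreover have "Well_order \<rho>" using le unfolding ordLeq_def by blast
  ultimately obtain a where "a \<in> Field \<gamma>" "\<rho> =o Restr \<gamma> (underS \<gamma> a)"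
    using ordLess_iff_ordIso_Restr[OF g] by blast
  then show ?thesis using that ofilter_underS[OF g] by blast
qed

definition word_iso_by :: "(nat \<Rightarrow> nat) \<Rightarrow> 'a word \<Rightarrow> 'a word \<Rightarrow> bool" where
  "word_iso_by f x y \<longleftrightarrow> bij_betw f (pos x) (pos y)
     \<and> (\<forall>i\<in>pos x. \<forall>j\<in>pos x. (i, j) \<in> fst x \<longleftrightarrow> (f i, f j) \<in> fst y)
     \<and> (\<forall>i\<in>pos x. snd y (f i) = snd x i)"

lemma word_iso_iff_by: "word_iso x y \<longleftrightarrow> (\<exists>f. word_iso_by f x y)"
  unfolding word_iso_def word_iso_by_def by blast

lemma word_iso_by_id: "word_iso_by id x x" unfolding word_iso_by_def by auto

lemma word_iso_refl[simp]: "word_iso x x" using word_iso_by_id word_iso_iff_by by blast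

lemma word_iso_by_inv:
  assumes "word_iso_by f x y" shows "word_iso_by (inv_into (pos x) f) y x"
proof -
  let ?g = "inv_into (pos x) f"
  have b: "bij_betw f (pos x) (pos y)" using assms word_iso_by_def by blast
  have bg: "bij_betw ?g (pos y) (pos x)" using b bij_betw_inv_into by blast
  have fg: "\<And>a. a \<in> pos y \<Longrightarrow> f (?g a) = a" using b by (meson bij_betw_inv_into_right)
  have gF: "\<And>a. a \<in> pos y \<Longrightarrow> ?g a \<in> pos x" using bg bij_betwE by blast
  show ?thesis unfolding word_iso_by_def
  proof (intro conjI ballI bg)
    fix i j assume "i \<in> pos y" "j \<in> pos y"
    then show "(i, j) \<in> fst y \<longleftrightarrow> (?g i, ?g j) \<in> fst x"
      using assms gF fg unfolding word_iso_by_def by metis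
  next
    fix i assume "i \<in> pos y" then show "snd x (?g i) = snd y i"
      using assms gF fg unfolding word_iso_by_def by metis
  qed
qed

lemma word_iso_sym: "word_iso x y \<Longrightarrow> word_iso y x"
  using word_iso_by_inv word_iso_iff_by by blast

lemma word_iso_by_comp: "word_iso_by f x y \<Longrightarrow> word_iso_by g y z \<Longrightarrow> word_iso_by (g \<circ> f) x z"
  unfolding word_iso_by_def
  by (auto simp: bij_betw_trans bij_betwE)

lemma word_iso_trans[trans]: "word_iso x y \<Longrightarrow> word_iso y z \<Longrightarrow> word_iso x z"
  unfolding word_iso_iff_by using word_iso_by_comp by blast

lemma word_iso_byD:
  assumes "word_iso_by f x y"
  shows "bij_betw f (pos x) (pos y)" "\<And>i j. i \<in> pos x \<Longrightarrow> j \<in> pos x \<Longrightarrow> (i, j) \<in> fst x \<longleftrightarrow>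
      (f i, f j) \<in> fst y"
    "\<And>i. i \<in> pos x \<Longrightarrow> snd y (f i) = snd x i" "\<And>i. i \<in> pos x \<Longrightarrow> f i \<in> pos y"
    "inj_on f (pos x)" "f ` pos x = pos y"
  using assms unfolding word_iso_by_def by (auto simp: bij_betw_def)

section \<open>Concatenation and powers\<close>

lemma rsum_has_min:
  assumes r: "Well_order r" and s: "Well_order s" and A: "A \<subseteq> Field (rsum r s)" "A \<noteq> {}"
  shows "\<exists>a\<in>A. \<forall>a'\<in>A. (a, a') \<in> rsum r s"
proof (cases "{i. inl_pos i \<in> A} = {}")
  case False
  have "{i. inl_pos i \<in> A} \<subseteq> Field r" using A(1) unfolding Field_rsum by auto
  then obtain m where m: "m \<in> {i. inl_pos i \<in> A}" "\<forall>a'\<in>{i. inl_pos i \<in> A}. (m, a') \<in> r"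
    using Well_order_has_min[OF r] False by blast
  have mF: "m \<in> Field r" using m(2) m(1) by (auto intro: FieldI1)
  show ?thesis
  proof (intro bexI ballI)
    show "inl_pos m \<in> A" using m by auto
  next
    fix a' assume a': "a' \<in> A"
    then have "a' \<in> inl_pos ` Field r \<union> inr_pos ` Field s" using A(1) Field_rsum by auto
    then show "(inl_pos m, a') \<in> rsum r s" using m a' mF by auto
  qed
next
  case True
  then have "A \<subseteq> inr_pos ` Field s" using A(1) unfolding Field_rsum by auto
  then have "{j. inr_pos j \<in> A} \<subseteq> Field s" and "{j. inr_pos j \<in> A} \<noteq> {}" using A(2) by auto
  then obtain m where m: "m \<in> {j. inr_pos j \<in> A}" "\<forall>a'\<in>{j. inr_pos j \<in> A}. (m, a') \<in> s"
    using Well_order_has_min[OF s] by blast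
  show ?thesis
  proof (intro bexI ballI)
    show "inr_pos m \<in> A" using m by auto
  next
    fix a' assume a': "a' \<in> A"
    then obtain j where "a' = inr_pos j" "inr_pos j \<in> A" using \<open>A \<subseteq> inr_pos ` Field s\<close> by auto
    then show "(inr_pos m, a') \<in> rsum r s" using m by auto
  qed
qed

lemma Well_order_rsum:
  assumes r: "Well_order r" and s: "Well_order s"
  shows "Well_order (rsum r s)"
proof (rule Well_orderI)
  show "\<forall>a\<in>Field (rsum r s). (a, a) \<in> rsum r s"
    unfolding Field_rsum using Well_order_refl[OF r] Well_order_refl[OF s] by auto
next
  show "trans (rsum r s)" unfolding trans_def
  proof (intro allI impI)
    fix a b c assume ab: "(a, b) \<in> rsum r s" and bc: "(b, c) \<in> rsum r s"
    show "(a, c) \<in> rsum r s"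
      by (cases a rule: sum_code_cases; cases b rule: sum_code_cases; cases c rule: sum_code_cases)
        (use ab bc Well_order_trans[OF r] Well_order_trans[OF s] in \<open>auto intro: FieldI1 FieldI2\<close>)
  qed
next
  show "antisym (rsum r s)" unfolding antisym_def
  proof (intro allI impI)
    fix a b assume ab: "(a, b) \<in> rsum r s" and ba: "(b, a) \<in> rsum r s"
    show "a = b"
      by (cases a rule: sum_code_cases; cases b rule: sum_code_cases)
        (use ab ba Well_order_antisym[OF r] Well_order_antisym[OF s] in auto)
  qed
next
  show "\<forall>a\<in>Field (rsum r s). \<forall>b\<in>Field (rsum r s). (a, b) \<in> rsum r s \<or> (b, a) \<in> rsum r s"
    unfolding Field_rsum using Well_order_total[OF r] Well_order_total[OF s] by auto blast+
next
  show "\<forall>A. A \<subseteq> Field (rsum r s) \<longrightarrow> A \<noteq> {} \<longrightarrow> (\<exists>a\<in>A. \<forall>a'\<in>A. (a, a') \<in> (rsum r s))"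
    using rsum_has_min[OF r s] by blast
qed

lemma Field_wpow:
  assumes x: "wo_word x" and a: "Well_order \<alpha>"
  shows "pos (wpow x \<alpha>) = {pow_pos i b | i b. i \<in> pos x \<and> b \<in> Field \<alpha>}"
proof (rule set_eqI)
  fix n show "n \<in> pos (wpow x \<alpha>) \<longleftrightarrow> n \<in> {pow_pos i b | i b. i \<in> pos x \<and> b \<in> Field \<alpha>}"
  proof
    assume "n \<in> pos (wpow x \<alpha>)"
    then obtain m where "(n, m) \<in> fst (wpow x \<alpha>) \<or> (m, n) \<in> fst (wpow x \<alpha>)"
      unfolding Field_def by blast
    then show "n \<in> {pow_pos i b | i b. i \<in> pos x \<and> b \<in> Field \<alpha>}"
      by (cases n rule: prod_code_cases; cases m rule: prod_code_cases) auto
  next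
    assume "n \<in> {pow_pos i b | i b. i \<in> pos x \<and> b \<in> Field \<alpha>}"
    then obtain i b where "n = pow_pos i b" "i \<in> pos x" "b \<in> Field \<alpha>" by blast
    then have "(n, n) \<in> fst (wpow x \<alpha>)" using Well_order_refl[OF x] by auto
    then show "n \<in> pos (wpow x \<alpha>)" by (rule FieldI1)
  qed
qed

lemma pow_pos_in_Field_wpow[simp]:
  "wo_word x \<Longrightarrow> Well_order \<alpha> \<Longrightarrow> pow_pos i b \<in> pos (wpow x \<alpha>) \<longleftrightarrow> i \<in> pos x \<and> b \<in> Field \<alpha>"
  by (auto simp: Field_wpow)

lemma wpow_has_min:
  assumes x: "wo_word x" and a: "Well_order \<alpha>" and A: "A \<subseteq> pos (wpow x \<alpha>)" "A \<noteq> {}"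
  shows "\<exists>a\<in>A. \<forall>a'\<in>A. (a, a') \<in> fst (wpow x \<alpha>)"
proof -
  define B where "B = {b. \<exists>i. pow_pos i b \<in> A}"
  have AF: "\<And>n. n \<in> A \<Longrightarrow> \<exists>i b. n = pow_pos i b \<and> i \<in> pos x \<and> b \<in> Field \<alpha>"
    using A(1) unfolding Field_wpow[OF x a] by blast
  have "B \<subseteq> Field \<alpha>" unfolding B_def using AF by fastforce
  moreover have "B \<noteq> {}" unfolding B_def using A(2) AF by fastforce
  ultimately obtain b0 where b0: "b0 \<in> B" "\<forall>b\<in>B. (b0, b) \<in> \<alpha>"
    using Well_order_has_min[OF a] by blast
  define I where "I = {i. pow_pos i b0 \<in> A}"
  have "I \<subseteq> pos x" unfolding I_def using AF by fastforce
  moreover have "I \<noteq> {}" using b0(1) unfolding I_def B_def by blast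
  ultimately obtain i0 where i0: "i0 \<in> I" "\<forall>i\<in>I. (i0, i) \<in> fst x"
    using Well_order_has_min[OF x] by blast
  show "\<exists>a\<in>A. \<forall>a'\<in>A. (a, a') \<in> fst (wpow x \<alpha>)"
  proof (intro bexI ballI)
    show "pow_pos i0 b0 \<in> A" using i0 I_def by auto
    fix a' assume "a' \<in> A"
    then obtain i b where ib: "a' = pow_pos i b" "i \<in> pos x" "b \<in> Field \<alpha>" "pow_pos i b \<in> A"
      using AF by blast
    have "b \<in> B" using ib B_def by blast
    then have 1: "(b0, b) \<in> \<alpha>" using b0 by blast
    have i0F: "i0 \<in> pos x" "b0 \<in> Field \<alpha>" using AF \<open>pow_pos i0 b0 \<in> A\<close> by fastforce+
    show "(pow_pos i0 b0, a') \<in> fst (wpow x \<alpha>)"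
    proof (cases "b = b0")
      case True
      then have "i \<in> I" using ib I_def by simp
      then show ?thesis using i0 ib True i0F by auto
    next
      case False then show ?thesis using ib 1 i0F by auto
    qed
  qed
qed

lemma Well_order_wpow:
  assumes x: "wo_word x" and a: "Well_order \<alpha>"
  shows "Well_order (fst (wpow x \<alpha>))"
proof (rule Well_orderI)
  show "\<forall>n\<in>pos (wpow x \<alpha>). (n, n) \<in> fst (wpow x \<alpha>)"
    unfolding Field_wpow[OF x a] using Well_order_refl[OF x] by auto
next
  show "trans (fst (wpow x \<alpha>))" unfolding trans_def
  proof (intro allI impI)
    fix n m k assume nm: "(n, m) \<in> fst (wpow x \<alpha>)" and mk: "(m, k) \<in> fst (wpow x \<alpha>)"
    obtain i b where n: "n = pow_pos i b" by (rule prod_code_cases)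
    obtain j c where m: "m = pow_pos j c" by (rule prod_code_cases)
    obtain l d where k: "k = pow_pos l d" by (rule prod_code_cases)
    have 1: "i \<in> pos x" "j \<in> pos x" "b \<in> Field \<alpha>" "c \<in> Field \<alpha>" "(b, c) \<in> \<alpha> \<and> b \<noteq> c \<or> b = c \<and>
        (i, j) \<in> fst x"
      using nm n m by auto
    have 2: "l \<in> pos x" "d \<in> Field \<alpha>" "(c, d) \<in> \<alpha> \<and> c \<noteq> d \<or> c = d \<and> (j, l) \<in> fst x"
      using mk m k by auto
    have "(b, d) \<in> \<alpha> \<and> b \<noteq> d \<or> b = d \<and> (i, l) \<in> fst x"
      using 1(5) 2(3) Well_order_trans[OF a, of b c d] Well_order_antisym[OF a, of b c] Well_order_trans[OF x, of i j l]
        by auto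
    then show "(n, k) \<in> fst (wpow x \<alpha>)" using n k 1 2 by auto
  qed
next
  show "antisym (fst (wpow x \<alpha>))" unfolding antisym_def
  proof (intro allI impI)
    fix n m assume nm: "(n, m) \<in> fst (wpow x \<alpha>)" and mn: "(m, n) \<in> fst (wpow x \<alpha>)"
    obtain i b where n: "n = pow_pos i b" by (rule prod_code_cases)
    obtain j c where m: "m = pow_pos j c" by (rule prod_code_cases)
    show "n = m" using nm mn n m Well_order_antisym[OF a, of b c] Well_order_antisym[OF x, of i j]
      by auto
  qed
next
  show "\<forall>n\<in>pos (wpow x \<alpha>). \<forall>m\<in>pos (wpow x \<alpha>). (n, m) \<in> fst (wpow x \<alpha>) \<or> (m, n) \<in> fst (wpow x \<alpha>)"
  proof (intro ballI)
    fix n m assume "n \<in> pos (wpow x \<alpha>)" "m \<in> pos (wpow x \<alpha>)"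
    then obtain i b j c where n: "n = pow_pos i b" "i \<in> pos x" "b \<in> Field \<alpha>"
      and m: "m = pow_pos j c" "j \<in> pos x" "c \<in> Field \<alpha>"
      unfolding Field_wpow[OF x a] by blast
    show "(n, m) \<in> fst (wpow x \<alpha>) \<or> (m, n) \<in> fst (wpow x \<alpha>)"
      using n m Well_order_total[OF a n(3) m(3)] Well_order_total[OF x n(2) m(2)] by auto
  qed
next
  show "\<forall>A. A \<subseteq> Field (fst (wpow x \<alpha>)) \<longrightarrow> A \<noteq> {} \<longrightarrow> (\<exists>a\<in>A. \<forall>a'\<in>A. (a, a') \<in> (fst (wpow x \<alpha>)))"
    using wpow_has_min[OF x a] by blast
qed

lemma pos_restr_word: "wo_word x \<Longrightarrow> S \<subseteq> pos x \<Longrightarrow> pos (restr_word x S) = S"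
  by (simp add: Field_Restr_Well_order)

lemma Well_order_restr_word: "wo_word x \<Longrightarrow> Well_order (fst (restr_word x S))"
  by (simp add: Well_order_Restr)

lemma restr_word_pos[simp]: "restr_word x (pos x) = x"
  unfolding restr_word_def by (simp add: Restr_Field)

lemma restr_word_restr_word: "restr_word (restr_word x S) T = restr_word x (S \<inter> T)"
  unfolding restr_word_def by auto

lemma word_iso_by_restr_word:
  assumes f: "word_iso_by f x y" and x: "wo_word x" and S: "S \<subseteq> pos x"
  shows "word_iso_by f (restr_word x S) (restr_word y (f ` S))"
proof -
  have b: "bij_betw f (pos x) (pos y)" using f word_iso_by_def by blast
  have o: "\<And>i j. i \<in> pos x \<Longrightarrow> j \<in> pos x \<Longrightarrow> (i, j) \<in> fst x \<longleftrightarrow> (f i, f j) \<in> fst y"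
    using f word_iso_by_def by blast
  have FS: "pos (restr_word x S) = S" using pos_restr_word[OF x S] .
  have FS2: "pos (restr_word y (f ` S)) = f ` S"
  proof
    show "pos (restr_word y (f ` S)) \<subseteq> f ` S" by (auto simp: Field_def)
    show "f ` S \<subseteq> pos (restr_word y (f ` S))"
    proof
      fix n assume "n \<in> f ` S"
      then obtain i where i: "i \<in> S" "n = f i" by blast
      have "(i, i) \<in> fst x" using Well_order_refl[OF x] S i by auto
      then have "(f i, f i) \<in> fst y" using o S i by auto
      then have "(n, n) \<in> fst (restr_word y (f ` S))" using i by auto
      then show "n \<in> pos (restr_word y (f ` S))" by (rule FieldI1)
    qed
  qed
  show ?thesis unfolding word_iso_by_def FS FS2
  proof (intro conjI ballI)
    show "bij_betw f S (f ` S)" using b S by (meson bij_betw_subset)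
  next
    fix i j assume "i \<in> S" "j \<in> S"
    then show "(i, j) \<in> fst (restr_word x S) \<longleftrightarrow> (f i, f j) \<in> fst (restr_word y (f ` S))"
      using o S by auto
  next
    fix i assume "i \<in> S" then show "snd (restr_word y (f ` S)) (f i) = snd (restr_word x S) i"
      using f S unfolding word_iso_by_def by auto
  qed
qed

lemma word_iso_restr_word_image:
  "word_iso_by f x y \<Longrightarrow> wo_word x \<Longrightarrow> S \<subseteq> pos x \<Longrightarrow> word_iso (restr_word x S) (restr_word y (f ` S))"
  using word_iso_by_restr_word word_iso_iff_by by blast

definition conc_map :: "(nat \<Rightarrow> nat) \<Rightarrow> (nat \<Rightarrow> nat) \<Rightarrow> nat \<Rightarrow> nat" where
  "conc_map f g n = (case sum_decode n of Inl i \<Rightarrow> inl_pos (f i) | Inr j \<Rightarrow> inr_pos (g j))"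

lemma conc_map_inl[simp]: "conc_map f g (inl_pos i) = inl_pos (f i)" by (simp add: conc_map_def)
lemma conc_map_inr[simp]: "conc_map f g (inr_pos i) = inr_pos (g i)" by (simp add: conc_map_def)

lemma in_inl_inr_imageD: "n \<in> inl_pos ` A \<union> inr_pos ` B \<Longrightarrow> (\<exists>i. i \<in> A \<and> n = inl_pos i) \<or> (\<exists>j. j \<in> B \<and>
    n = inr_pos j)"
  by blast

lemma bij_betw_conc_map:
  assumes bf: "bij_betw f A A'" and bg: "bij_betw g B B'"
  shows "bij_betw (conc_map f g) (inl_pos ` A \<union> inr_pos ` B) (inl_pos ` A' \<union> inr_pos ` B')"
proof -
  have "inj_on (conc_map f g) (inl_pos ` A \<union> inr_pos ` B)"
  proof (rule inj_onI)
    fix n m assume "n \<in> inl_pos ` A \<union> inr_pos ` B" "m \<in> inl_pos ` A \<union> inr_pos ` B"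
      and "conc_map f g n = conc_map f g m"
    then show "n = m"
      using bij_betw_imp_inj_on[OF bf] bij_betw_imp_inj_on[OF bg] by (auto simp: inj_on_eq_iff)
  qed
  moreover have "conc_map f g ` (inl_pos ` A \<union> inr_pos ` B) = inl_pos ` (f ` A) \<union> inr_pos ` (g ` B)"
    by (simp add: image_Un image_image)
  then have "conc_map f g ` (inl_pos ` A \<union> inr_pos ` B) = inl_pos ` A' \<union> inr_pos ` B'"
    using bij_betw_imp_surj_on[OF bf] bij_betw_imp_surj_on[OF bg] by simp
  ultimately show ?thesis unfolding bij_betw_def ..
qed

lemma word_iso_by_conc:
  assumes f: "word_iso_by f x x'" and g: "word_iso_by g y y'"
  shows "word_iso_by (conc_map f g) (conc x y) (conc x' y')"
proof -
  have bf: "bij_betw f (pos x) (pos x')" and bg: "bij_betw g (pos y) (pos y')"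
    using f g word_iso_by_def by blast+
  have fF: "\<And>i. i \<in> pos x \<Longrightarrow> f i \<in> pos x'" using bf bij_betwE by blast
  have gF: "\<And>i. i \<in> pos y \<Longrightarrow> g i \<in> pos y'" using bg bij_betwE by blast
  have fo: "\<And>i j. i \<in> pos x \<Longrightarrow> j \<in> pos x \<Longrightarrow> (i, j) \<in> fst x \<longleftrightarrow> (f i, f j) \<in> fst x'"
    using f word_iso_by_def by blast
  have go: "\<And>i j. i \<in> pos y \<Longrightarrow> j \<in> pos y \<Longrightarrow> (i, j) \<in> fst y \<longleftrightarrow> (g i, g j) \<in> fst y'"
    using g word_iso_by_def by blast
  have fl: "\<And>i. i \<in> pos x \<Longrightarrow> snd x' (f i) = snd x i" using f word_iso_by_def by blast
  have gl: "\<And>i. i \<in> pos y \<Longrightarrow> snd y' (g i) = snd y i" using g word_iso_by_def by blast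
  show ?thesis unfolding word_iso_by_def conc_fst Field_rsum
  proof (intro conjI ballI)
    show "bij_betw (conc_map f g) (inl_pos ` pos x \<union> inr_pos ` pos y)
        (inl_pos ` pos x' \<union> inr_pos ` pos y')"
      using bij_betw_conc_map bf bg by blast
  next
    fix n m assume n: "n \<in> inl_pos ` pos x \<union> inr_pos ` pos y"
      and m: "m \<in> inl_pos ` pos x \<union> inr_pos ` pos y"
    from in_inl_inr_imageD[OF n] in_inl_inr_imageD[OF m] show "(n, m) \<in> rsum (fst x) (fst y) \<longleftrightarrow>
        (conc_map f g n, conc_map f g m) \<in> rsum (fst x') (fst y')"
      using fo go fF gF by auto
  next
    fix n assume n: "n \<in> inl_pos ` pos x \<union> inr_pos ` pos y"
    from in_inl_inr_imageD[OF n] show "snd (conc x' y') (conc_map f g n) = snd (conc x y) n"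
      using fl gl by auto
  qed
qed

lemma word_iso_conc: "word_iso x x' \<Longrightarrow> word_iso y y' \<Longrightarrow> word_iso (conc x y) (conc x' y')"
  unfolding word_iso_iff_by using word_iso_by_conc by blast

lemma word_iso_conc_l: "word_iso x x' \<Longrightarrow> word_iso (conc x y) (conc x' y)"
  using word_iso_conc word_iso_refl by blast
lemma word_iso_conc_r: "word_iso y y' \<Longrightarrow> word_iso (conc x y) (conc x y')"
  using word_iso_conc word_iso_refl by blast

definition assoc_map :: "nat \<Rightarrow> nat" where
  "assoc_map n = (case sum_decode n of Inl n' \<Rightarrow> (case sum_decode n' of Inl i \<Rightarrow> inl_pos i | Inr j \<Rightarrow> inr_pos (inl_pos j)) | Inr k \<Rightarrow> inr_pos (inr_pos k))"

lemma assoc_map_simps[simp]: "assoc_map (inl_pos (inl_pos i)) = inl_pos i"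
  "assoc_map (inl_pos (inr_pos j)) = inr_pos (inl_pos j)"
    "assoc_map (inr_pos k) = inr_pos (inr_pos k)"
  by (simp_all add: assoc_map_def)

lemma conc_assoc: "word_iso (conc (conc x y) z) (conc x (conc y z))"
  unfolding word_iso_iff_by
proof (intro exI)
  show "word_iso_by assoc_map (conc (conc x y) z) (conc x (conc y z))"
    unfolding word_iso_by_def conc_fst Field_rsum
  proof (intro conjI ballI)
    show "bij_betw assoc_map (inl_pos ` (inl_pos ` pos x \<union> inr_pos ` pos y) \<union> inr_pos ` pos z)
        (inl_pos ` pos x \<union> inr_pos ` (inl_pos ` pos y \<union> inr_pos ` pos z))"
      unfolding bij_betw_def
    proof
      show "inj_on assoc_map (inl_pos ` (inl_pos ` pos x \<union> inr_pos ` pos y) \<union> inr_pos ` pos z)"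
        by (rule inj_onI) auto
      show "assoc_map ` (inl_pos ` (inl_pos ` pos x \<union> inr_pos ` pos y) \<union> inr_pos ` pos z) = inl_pos ` pos x \<union> inr_pos ` (inl_pos ` pos y \<union> inr_pos ` pos z)"
        by (auto simp: image_image image_Un)
    qed
  next
    fix n m assume "n \<in> inl_pos ` (inl_pos ` pos x \<union> inr_pos ` pos y) \<union> inr_pos ` pos z"
      "m \<in> inl_pos ` (inl_pos ` pos x \<union> inr_pos ` pos y) \<union> inr_pos ` pos z"
    then show "(n, m) \<in> rsum (rsum (fst x) (fst y)) (fst z) \<longleftrightarrow>
        (assoc_map n, assoc_map m) \<in> rsum (fst x) (rsum (fst y) (fst z))"
      by (auto simp: Field_rsum)
  next
    fix n assume "n \<in> inl_pos ` (inl_pos ` pos x \<union> inr_pos ` pos y) \<union> inr_pos ` pos z"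
    then show "snd (conc x (conc y z)) (assoc_map n) = snd (conc (conc x y) z) n" by auto
  qed
qed

definition empty_word :: "'a word" where "empty_word = ({}, \<lambda>_. undefined)"

lemma empty_word_fst[simp]: "fst empty_word = {}" by (simp add: empty_word_def)

lemma Well_order_empty: "Well_order {}"
  by (rule Well_orderI) (auto simp: trans_def antisym_def)

lemma word_iso_empty: "pos x = {} \<Longrightarrow> pos y = {} \<Longrightarrow> word_iso x y"
  unfolding word_iso_def by (auto simp: bij_betw_def)

lemma conc_empty_l: "pos e = {} \<Longrightarrow> word_iso (conc e x) x"
  unfolding word_iso_iff_by word_iso_by_def
  by (rule exI[of _ "\<lambda>n. case sum_decode n of Inl i \<Rightarrow> i | Inr j \<Rightarrow> j"])
    (auto simp: Field_rsum bij_betw_def inj_on_def image_image)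

lemma conc_empty_r: "pos e = {} \<Longrightarrow> word_iso (conc x e) x"
  unfolding word_iso_iff_by word_iso_by_def
  by (rule exI[of _ "\<lambda>n. case sum_decode n of Inl i \<Rightarrow> i | Inr j \<Rightarrow> j"])
    (auto simp: Field_rsum bij_betw_def inj_on_def image_image)

definition untag :: "nat \<Rightarrow> nat" where
  "untag n = (case sum_decode n of Inl i \<Rightarrow> i | Inr j \<Rightarrow> j)"
lemma untag_simps[simp]: "untag (inl_pos i) = i" "untag (inr_pos i) = i"
  by (simp_all add: untag_def)

lemma conc_restr_word_iso:
  assumes X: "wo_word X" and S1: "S1 \<subseteq> pos X" and S2: "S2 \<subseteq> pos X"
    and lt: "\<And>a b. a \<in> S1 \<Longrightarrow> b \<in> S2 \<Longrightarrow> (a, b) \<in> fst X \<and> a \<noteq> b"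
  shows "word_iso (conc (restr_word X S1) (restr_word X S2)) (restr_word X (S1 \<union> S2))"
  unfolding word_iso_iff_by
proof (intro exI)
  have F1: "pos (conc (restr_word X S1) (restr_word X S2)) = inl_pos ` S1 \<union> inr_pos ` S2"
    using Field_rsum pos_restr_word[OF X S1] pos_restr_word[OF X S2] by simp
  have F2: "pos (restr_word X (S1 \<union> S2)) = S1 \<union> S2" using pos_restr_word[OF X] S1 S2 by simp
  show "word_iso_by untag (conc (restr_word X S1) (restr_word X S2)) (restr_word X (S1 \<union> S2))"
    unfolding word_iso_by_def F1 F2
  proof (intro conjI ballI)
    show "bij_betw untag (inl_pos ` S1 \<union> inr_pos ` S2) (S1 \<union> S2)" unfolding bij_betw_def
    proof
      show "inj_on untag (inl_pos ` S1 \<union> inr_pos ` S2)"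
      proof (rule inj_onI)
        fix n m assume n: "n \<in> inl_pos ` S1 \<union> inr_pos ` S2" and m: "m \<in> inl_pos ` S1 \<union> inr_pos ` S2"
          and e: "untag n = untag m"
        from in_inl_inr_imageD[OF n] in_inl_inr_imageD[OF m] show "n = m"
          using e lt by auto (use lt in blast)+
      qed
      show "untag ` (inl_pos ` S1 \<union> inr_pos ` S2) = S1 \<union> S2" by (simp add: image_Un image_image)
    qed
  next
    fix n m assume n: "n \<in> inl_pos ` S1 \<union> inr_pos ` S2" and m: "m \<in> inl_pos ` S1 \<union> inr_pos ` S2"
    have ls: "\<And>a b. a \<in> S1 \<Longrightarrow> b \<in> S2 \<Longrightarrow> (b, a) \<notin> fst X"
      using lt Well_order_antisym[OF X] by blast
    from in_inl_inr_imageD[OF n] in_inl_inr_imageD[OF m]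
    show "(n, m) \<in> fst (conc (restr_word X S1) (restr_word X S2)) \<longleftrightarrow>
        (untag n, untag m) \<in> fst (restr_word X (S1 \<union> S2))"
      using pos_restr_word[OF X S1] pos_restr_word[OF X S2] lt ls by auto
  next
    fix n assume n: "n \<in> inl_pos ` S1 \<union> inr_pos ` S2"
    from in_inl_inr_imageD[OF n] show "snd (restr_word X (S1 \<union> S2))
        (untag n) = snd (conc (restr_word X S1) (restr_word X S2)) n"
      by auto
  qed
qed

lemma restr_word_conc:
  assumes X: "wo_word X" and Y: "wo_word Y" and S: "S \<subseteq> pos X" and T: "T \<subseteq> pos Y"
  shows "restr_word (conc X Y) (inl_pos ` S \<union> inr_pos ` T) = conc (restr_word X S) (restr_word Y T)"
proof -
  have FS: "Field (Restr (fst X) S) = S" using Field_Restr_Well_order[OF X S] .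
  have FT: "Field (Restr (fst Y) T) = T" using Field_Restr_Well_order[OF Y T] .
  have 1: "Restr (rsum (fst X) (fst Y)) (inl_pos ` S \<union> inr_pos ` T) = rsum (Restr (fst X) S)
      (Restr (fst Y) T)"
  proof (rule set_eqI)
    fix p :: "nat \<times> nat"
    obtain a b where p: "p = (a, b)" by fastforce
    show "p \<in> Restr (rsum (fst X) (fst Y)) (inl_pos ` S \<union> inr_pos ` T) \<longleftrightarrow> p \<in> rsum (Restr (fst X) S)
        (Restr (fst Y) T)"
      unfolding p
      by (cases a rule: sum_code_cases; cases b rule: sum_code_cases) (use S T FS FT in auto)
  qed
  show ?thesis unfolding restr_word_def conc_def using 1 by (simp add: fun_eq_iff split: sum.split)
qed

lemma restr_word_wpow:
  assumes x: "wo_word x" and a: "Well_order \<alpha>" and B: "B \<subseteq> Field \<alpha>"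
  shows "restr_word (wpow x \<alpha>) {pow_pos i b | i b. i \<in> pos x \<and> b \<in> B} = wpow x (Restr \<alpha> B)"
proof -
  have FB: "Field (Restr \<alpha> B) = B" using Field_Restr_Well_order[OF a B] .
  have 1: "Restr (fst (wpow x \<alpha>)) {pow_pos i b | i b. i \<in> pos x \<and> b \<in> B} = fst (wpow x (Restr \<alpha> B))"
  proof (rule set_eqI)
    fix p :: "nat \<times> nat"
    obtain n m where p: "p = (n, m)" by fastforce
    obtain i b where n: "n = pow_pos i b" by (rule prod_code_cases)
    obtain j c where m: "m = pow_pos j c" by (rule prod_code_cases)
    show "p \<in> Restr (fst (wpow x \<alpha>)) {pow_pos i b | i b. i \<in> pos x \<and> b \<in> B} \<longleftrightarrow>
        p \<in> fst (wpow x (Restr \<alpha> B))"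
      unfolding p n m using FB B by auto
  qed
  show ?thesis unfolding restr_word_def using 1 by (simp add: wpow_def)
qed

lemma restr_word_wpow_copy:
  assumes x: "wo_word x" and a: "Well_order \<alpha>" and S: "S \<subseteq> pos x" and e: "e \<in> Field \<alpha>"
  shows "word_iso (restr_word (wpow x \<alpha>) ((\<lambda>i. pow_pos i e) ` S)) (restr_word x S)"
  unfolding word_iso_iff_by
proof (intro exI)
  have P: "(\<lambda>i. pow_pos i e) ` S \<subseteq> pos (wpow x \<alpha>)" using S e x a by auto
  have F1: "pos (restr_word (wpow x \<alpha>) ((\<lambda>i. pow_pos i e) ` S)) = (\<lambda>i. pow_pos i e) ` S"
    using pos_restr_word[OF Well_order_wpow[OF x a] P] .
  have F2: "pos (restr_word x S) = S" using pos_restr_word[OF x S] .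
  show "word_iso_by (\<lambda>n. fst (prod_decode n)) (restr_word (wpow x \<alpha>) ((\<lambda>i. pow_pos i e) ` S))
      (restr_word x S)"
    unfolding word_iso_by_def F1 F2
  proof (intro conjI ballI)
    show "bij_betw (\<lambda>n. fst (prod_decode n)) ((\<lambda>i. pow_pos i e) ` S) S"
      unfolding bij_betw_def by (auto simp: inj_on_def image_image)
  next
    fix n m assume "n \<in> (\<lambda>i. pow_pos i e) ` S" "m \<in> (\<lambda>i. pow_pos i e) ` S"
    then show "(n, m) \<in> fst (restr_word (wpow x \<alpha>) ((\<lambda>i. pow_pos i e) ` S)) \<longleftrightarrow>
        (fst (prod_decode n), fst (prod_decode m)) \<in> fst (restr_word x S)"
      using S e by auto
  next
    fix n assume "n \<in> (\<lambda>i. pow_pos i e) ` S"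
    then show "snd (restr_word x S) (fst (prod_decode n))
      = snd (restr_word (wpow x \<alpha>) ((\<lambda>i. pow_pos i e) ` S)) n"
      by auto
  qed
qed

lemma wpow_singleton:
  assumes x: "wo_word x" and a: "Well_order \<alpha>" and e: "e \<in> Field \<alpha>"
  shows "word_iso (wpow x (Restr \<alpha> {e})) x"
proof -
  have eS: "{e} \<subseteq> Field \<alpha>" using e by simp
  have "wpow x (Restr \<alpha> {e}) = restr_word (wpow x \<alpha>) {pow_pos i b | i b. i \<in> pos x \<and> b \<in> {e}}"
    using restr_word_wpow[OF x a eS] by (rule sym)
  also have "{pow_pos i b | i b. i \<in> pos x \<and> b \<in> {e}} = (\<lambda>i. pow_pos i e) ` pos x" by auto
  finally have "wpow x (Restr \<alpha> {e}) = restr_word (wpow x \<alpha>) ((\<lambda>i. pow_pos i e) ` pos x)" .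
  then show ?thesis using restr_word_wpow_copy[OF x a _ e, of "pos x"] by simp
qed

lemma conc_wpow_Restr:
  assumes x: "wo_word x" and a: "Well_order \<alpha>" and S1: "S1 \<subseteq> Field \<alpha>" and S2: "S2 \<subseteq> Field \<alpha>"
    and lt: "\<And>a b. a \<in> S1 \<Longrightarrow> b \<in> S2 \<Longrightarrow> (a, b) \<in> \<alpha> \<and> a \<noteq> b"
  shows "word_iso (conc (wpow x (Restr \<alpha> S1)) (wpow x (Restr \<alpha> S2))) (wpow x (Restr \<alpha> (S1 \<union> S2)))"
proof -
  define P1 where "P1 = {pow_pos i b | i b. i \<in> pos x \<and> b \<in> S1}"
  define P2 where "P2 = {pow_pos i b | i b. i \<in> pos x \<and> b \<in> S2}"
  have W: "Well_order (fst (wpow x \<alpha>))" using Well_order_wpow[OF x a] .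
  have P1F: "P1 \<subseteq> pos (wpow x \<alpha>)" using S1 x a unfolding P1_def by auto
  have P2F: "P2 \<subseteq> pos (wpow x \<alpha>)" using S2 x a unfolding P2_def by auto
  have "word_iso (conc (restr_word (wpow x \<alpha>) P1) (restr_word (wpow x \<alpha>) P2))
      (restr_word (wpow x \<alpha>) (P1 \<union> P2))"
  proof (rule conc_restr_word_iso[OF W P1F P2F])
    fix p q assume "p \<in> P1" "q \<in> P2"
    then show "(p, q) \<in> fst (wpow x \<alpha>) \<and> p \<noteq> q" unfolding P1_def P2_def using lt S1 S2 by auto
  qed
  moreover have "restr_word (wpow x \<alpha>) P1 = wpow x (Restr \<alpha> S1)" unfolding P1_def
    using restr_word_wpow[OF x a S1] .
  moreover have "restr_word (wpow x \<alpha>) P2 = wpow x (Restr \<alpha> S2)" unfolding P2_def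
    using restr_word_wpow[OF x a S2] .
  moreover have "P1 \<union> P2 = {pow_pos i b | i b. i \<in> pos x \<and> b \<in> S1 \<union> S2}"
    unfolding P1_def P2_def by auto
  moreover have U: "S1 \<union> S2 \<subseteq> Field \<alpha>" using S1 S2 by simp
  moreover have "restr_word (wpow x \<alpha>) {pow_pos i b | i b. i \<in> pos x \<and>
      b \<in> S1 \<union> S2} = wpow x (Restr \<alpha> (S1 \<union> S2))"
    using restr_word_wpow[OF x a U] .
  ultimately show ?thesis by simp
qed

lemma word_iso_wpow:
  assumes x: "wo_word x" and x': "wo_word x'" and xx': "word_iso x x'" and \<alpha>\<alpha>': "\<alpha> =o \<alpha>'"
  shows "word_iso (wpow x \<alpha>) (wpow x' \<alpha>')"
proof -
  have \<alpha>: "Well_order \<alpha>" and \<alpha>': "Well_order \<alpha>'" using \<alpha>\<alpha>' unfolding ordIso_def by auto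
  obtain f where f: "word_iso_by f x x'" using xx' word_iso_iff_by by blast
  obtain g where g: "iso \<alpha> \<alpha>' g" using \<alpha>\<alpha>' unfolding ordIso_def by auto
  have bf: "bij_betw f (pos x) (pos x')"
    and fo: "\<And>i j. i \<in> pos x \<Longrightarrow> j \<in> pos x \<Longrightarrow> (i, j) \<in> fst x \<longleftrightarrow> (f i, f j) \<in> fst x'"
    and fl: "\<And>i. i \<in> pos x \<Longrightarrow> snd x' (f i) = snd x i"
    using f unfolding word_iso_by_def by blast+
  have bg: "bij_betw g (Field \<alpha>) (Field \<alpha>')"
    and go: "\<And>b c. b \<in> Field \<alpha> \<Longrightarrow> c \<in> Field \<alpha> \<Longrightarrow> (b, c) \<in> \<alpha> \<longleftrightarrow> (g b, g c) \<in> \<alpha>'"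
    using g unfolding iso_iff2 by blast+
  define h where "h n = (case prod_decode n of (i, b) \<Rightarrow> pow_pos (f i) (g b))" for n
  have h[simp]: "h (pow_pos i b) = pow_pos (f i) (g b)" for i b by (simp add: h_def)
  let ?P = "{pow_pos i b | i b. i \<in> pos x \<and> b \<in> Field \<alpha>}"
  let ?P' = "{pow_pos i b | i b. i \<in> pos x' \<and> b \<in> Field \<alpha>'}"
  have "inj_on h ?P"
    using bij_betw_imp_inj_on[OF bf] bij_betw_imp_inj_on[OF bg] by (auto simp: inj_on_def)
  moreover have "h ` ?P = ?P'"
  proof
    show "h ` ?P \<subseteq> ?P'" using bij_betwE[OF bf] bij_betwE[OF bg] by auto
    show "?P' \<subseteq> h ` ?P"
    proof
      fix n assume "n \<in> ?P'"
      then obtain i' b' where n: "n = pow_pos i' b'" "i' \<in> pos x'" "b' \<in> Field \<alpha>'" by blast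
      obtain i b where "i \<in> pos x" "i' = f i" "b \<in> Field \<alpha>" "b' = g b"
        using n bij_betw_imp_surj_on[OF bf] bij_betw_imp_surj_on[OF bg] by blast
      then show "n \<in> h ` ?P" using n by force
    qed
  qed
  ultimately have "bij_betw h ?P ?P'" unfolding bij_betw_def ..
  moreover have "(n, m) \<in> fst (wpow x \<alpha>) \<longleftrightarrow> (h n, h m) \<in> fst (wpow x' \<alpha>')" if nm_P: "n \<in> ?P"
    "m \<in> ?P" for n m
  proof -
    obtain i b j c where nm: "n = pow_pos i b" "i \<in> pos x" "b \<in> Field \<alpha>" "m = pow_pos j c"
      "j \<in> pos x" "c \<in> Field \<alpha>"
      using nm_P by blast
    have "g b = g c \<longleftrightarrow> b = c" using bij_betw_imp_inj_on[OF bg] nm unfolding inj_on_def by blast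
    then show ?thesis using nm fo go bij_betwE[OF bf] bij_betwE[OF bg] by auto
  qed
  moreover have "snd (wpow x' \<alpha>') (h n) = snd (wpow x \<alpha>) n" if "n \<in> ?P" for n
    using that fl by auto
  ultimately have "word_iso_by h (wpow x \<alpha>) (wpow x' \<alpha>')"
    unfolding word_iso_by_def Field_wpow[OF x \<alpha>] Field_wpow[OF x' \<alpha>'] by blast
  then show ?thesis using word_iso_iff_by by blast
qed

lemma wpow_ordIso: "wo_word x \<Longrightarrow> \<alpha> =o \<alpha>' \<Longrightarrow> word_iso (wpow x \<alpha>) (wpow x \<alpha>')"
  using word_iso_wpow word_iso_refl by blast

lemma ordIso_Restr_rsum_inl:
  assumes a: "Well_order \<alpha>" and b: "Well_order \<beta>"
  shows "\<alpha> =o Restr (rsum \<alpha> \<beta>) (inl_pos ` Field \<alpha>)"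
proof -
  have R: "Well_order (rsum \<alpha> \<beta>)" using Well_order_rsum[OF a b] .
  have S: "inl_pos ` Field \<alpha> \<subseteq> Field (rsum \<alpha> \<beta>)" using Field_rsum by auto
  have FR: "Field (Restr (rsum \<alpha> \<beta>) (inl_pos ` Field \<alpha>)) = inl_pos ` Field \<alpha>"
    using Field_Restr_Well_order[OF R S] .
  have "iso \<alpha> (Restr (rsum \<alpha> \<beta>) (inl_pos ` Field \<alpha>)) inl_pos"
    unfolding iso_iff2 FR by (auto simp: bij_betw_def inj_on_def)
  then show ?thesis unfolding ordIso_def using a Well_order_Restr[OF R] by blast
qed

lemma ordIso_Restr_rsum_inr:
  assumes a: "Well_order \<alpha>" and b: "Well_order \<beta>"
  shows "\<beta> =o Restr (rsum \<alpha> \<beta>) (inr_pos ` Field \<beta>)"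
proof -
  have R: "Well_order (rsum \<alpha> \<beta>)" using Well_order_rsum[OF a b] .
  have S: "inr_pos ` Field \<beta> \<subseteq> Field (rsum \<alpha> \<beta>)" using Field_rsum by auto
  have FR: "Field (Restr (rsum \<alpha> \<beta>) (inr_pos ` Field \<beta>)) = inr_pos ` Field \<beta>"
    using Field_Restr_Well_order[OF R S] .
  have "iso \<beta> (Restr (rsum \<alpha> \<beta>) (inr_pos ` Field \<beta>)) inr_pos"
    unfolding iso_iff2 FR by (auto simp: bij_betw_def inj_on_def)
  then show ?thesis unfolding ordIso_def using b Well_order_Restr[OF R] by blast
qed

lemma conc_wpow_rsum:
  assumes x: "wo_word x" and a: "Well_order \<alpha>" and b: "Well_order \<beta>"
  shows "word_iso (conc (wpow x \<alpha>) (wpow x \<beta>)) (wpow x (rsum \<alpha> \<beta>))"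
proof -
  let ?R = "rsum \<alpha> \<beta>"
  have R: "Well_order ?R" using Well_order_rsum[OF a b] .
  have 1: "word_iso (conc (wpow x (Restr ?R (inl_pos ` Field \<alpha>)))
      (wpow x (Restr ?R (inr_pos ` Field \<beta>))))
     (wpow x (Restr ?R (inl_pos ` Field \<alpha> \<union> inr_pos ` Field \<beta>)))"
    by (rule conc_wpow_Restr[OF x R]) (auto simp: Field_rsum)
  have 2: "Restr ?R (inl_pos ` Field \<alpha> \<union> inr_pos ` Field \<beta>) = ?R"
    using Restr_Field[of ?R] by (simp add: Field_rsum)
  have 3: "word_iso (wpow x \<alpha>) (wpow x (Restr ?R (inl_pos ` Field \<alpha>)))"
    using wpow_ordIso[OF x ordIso_Restr_rsum_inl[OF a b]] .
  have 4: "word_iso (wpow x \<beta>) (wpow x (Restr ?R (inr_pos ` Field \<beta>)))"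
    using wpow_ordIso[OF x ordIso_Restr_rsum_inr[OF a b]] .
  have 5: "word_iso (conc (wpow x \<alpha>) (wpow x \<beta>)) (conc (wpow x (Restr ?R (inl_pos ` Field \<alpha>)))
      (wpow x (Restr ?R (inr_pos ` Field \<beta>))))"
    using word_iso_conc[OF 3 4] .
  show ?thesis using word_iso_trans[OF 5 1] 2 by simp
qed

lemma Well_order_ord_one: "Well_order ord_one"
  unfolding ord_one_def by (rule Well_orderI) (auto simp: trans_def antisym_def Field_def)

lemma Field_ord_one: "Field ord_one = {0}" unfolding ord_one_def Field_def by auto

lemma wpow_ord_one:
  assumes x: "wo_word x" shows "word_iso (wpow x ord_one) x"
proof -
  have "Restr ord_one {0} = ord_one" unfolding ord_one_def by auto
  then show ?thesis using wpow_singleton[OF x Well_order_ord_one, of 0] Field_ord_one by simp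
qed

lemma word_iso_by_restr_inflationary:
  assumes x: "wo_word x" and S: "S \<subseteq> pos x" and f: "word_iso_by f x (restr_word x S)"
    and a: "a \<in> pos x"
  shows "(a, f a) \<in> fst x"
proof (rule wo_inflationary[OF x _ _ a])
  have "\<And>a. a \<in> pos x \<Longrightarrow> f a \<in> S" using word_iso_byD(4)[OF f] pos_restr_word[OF x S] by auto
  then show "\<And>a. a \<in> pos x \<Longrightarrow> f a \<in> pos x" using S by blast
  fix a b assume ab: "a \<in> pos x" "b \<in> pos x" "(a, b) \<in> fst x" "a \<noteq> b"
  have "(f a, f b) \<in> Restr (fst x) S" using word_iso_byD(2)[OF f] ab by auto
  moreover have "f a \<noteq> f b" using inj_onD[OF word_iso_byD(5)[OF f]] ab by blast
  ultimately show "(f a, f b) \<in> fst x \<and> f a \<noteq> f b" by auto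
qed

lemma word_iso_ofilter_eq:
  assumes x: "wo_word x" and S: "ofilter (fst x) S" and iso: "word_iso x (restr_word x S)"
  shows "S = pos x"
proof
  show S_pos: "S \<subseteq> pos x" using ofilter_subset[OF S] .
  obtain f where f: "word_iso_by f x (restr_word x S)" using iso word_iso_iff_by by blast
  show "pos x \<subseteq> S"
  proof
    fix a assume a: "a \<in> pos x"
    have "f a \<in> S" using word_iso_byD(4)[OF f a] pos_restr_word[OF x S_pos] by simp
    then show "a \<in> S"
      using ofilter_downD[OF S _ word_iso_by_restr_inflationary[OF x S_pos f a]] by blast
  qed
qed

lemma not_word_iso_underS:
  assumes x: "wo_word x" and q: "q \<in> pos x" shows "\<not> word_iso x (restr_word x (underS (fst x) q))"
proof
  assume "word_iso x (restr_word x (underS (fst x) q))"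
  then have "underS (fst x) q = pos x" using word_iso_ofilter_eq[OF x ofilter_underS[OF x]] by blast
  then show False using q unfolding underS_def by auto
qed

lemma word_iso_by_underS:
  assumes f: "word_iso_by f X Y" and X: "wo_word X" and p: "p \<in> pos X"
  shows "f ` underS (fst X) p = underS (fst Y) (f p)"
proof
  show "f ` underS (fst X) p \<subseteq> underS (fst Y) (f p)"
  proof
    fix b assume "b \<in> f ` underS (fst X) p"
    then obtain a where a: "a \<in> underS (fst X) p" "b = f a" by blast
    have aF: "a \<in> pos X" using a(1) by (rule subsetD[OF underS_subset_Field])
    have "(f a, f p) \<in> fst Y" using a(1) word_iso_byD(2)[OF f aF p] unfolding underS_def by auto
    moreover have "f a \<noteq> f p"
      using inj_onD[OF word_iso_byD(5)[OF f] _ aF p] a(1) unfolding underS_def by auto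
    ultimately show "b \<in> underS (fst Y) (f p)" using a unfolding underS_def by auto
  qed
  show "underS (fst Y) (f p) \<subseteq> f ` underS (fst X) p"
  proof
    fix b assume b: "b \<in> underS (fst Y) (f p)"
    then have "b \<in> pos Y" by (rule subsetD[OF underS_subset_Field])
    then obtain a where a: "a \<in> pos X" "b = f a" using word_iso_byD(6)[OF f] by blast
    have "(a, p) \<in> fst X" "a \<noteq> p"
      using b a word_iso_byD(2)[OF f a(1) p] unfolding underS_def by auto
    then show "b \<in> f ` underS (fst X) p" using a unfolding underS_def by auto
  qed
qed

lemma word_iso_by_above:
  assumes f: "word_iso_by f X Y" and X: "wo_word X" and p: "p \<in> pos X"
  shows "f ` above (fst X) p = above (fst Y) (f p)"
proof
  show "f ` above (fst X) p \<subseteq> above (fst Y) (f p)"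
  proof
    fix b assume "b \<in> f ` above (fst X) p"
    then obtain a where a: "a \<in> above (fst X) p" "b = f a" by blast
    have aF: "a \<in> pos X" using a(1) by (rule subsetD[OF above_Field])
    have "(f p, f a) \<in> fst Y" using a(1) word_iso_byD(2)[OF f p aF] unfolding above_eq by auto
    then show "b \<in> above (fst Y) (f p)" using a word_iso_byD(4)[OF f aF] unfolding above_eq by auto
  qed
  show "above (fst Y) (f p) \<subseteq> f ` above (fst X) p"
  proof
    fix b assume b: "b \<in> above (fst Y) (f p)"
    then have "b \<in> pos Y" by (rule subsetD[OF above_Field])
    then obtain a where a: "a \<in> pos X" "b = f a" using word_iso_byD(6)[OF f] by blast
    have "(p, a) \<in> fst X" using b a word_iso_byD(2)[OF f p a(1)] unfolding above_eq by auto
    then show "b \<in> f ` above (fst X) p" using a unfolding above_eq by auto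
  qed
qed

lemma word_iso_by_init:
  assumes f: "word_iso_by f X Y" and X: "wo_word X" and p: "p \<in> pos X"
  shows "word_iso (restr_word X (underS (fst X) p)) (restr_word Y (underS (fst Y) (f p)))"
proof -
  have "word_iso (restr_word X (underS (fst X) p)) (restr_word Y (f ` underS (fst X) p))"
    using word_iso_restr_word_image[OF f X underS_subset_Field] .
  then show ?thesis using word_iso_by_underS[OF f X p] by simp
qed

lemma word_iso_by_final:
  assumes f: "word_iso_by f X Y" and X: "wo_word X" and p: "p \<in> pos X"
  shows "word_iso (restr_word X (above (fst X) p)) (restr_word Y (above (fst Y) (f p)))"
proof -
  have "word_iso (restr_word X (above (fst X) p)) (restr_word Y (f ` above (fst X) p))"
    using word_iso_restr_word_image[OF f X above_Field] .
  then show ?thesis using word_iso_by_above[OF f X p] by simp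
qed

lemma underS_restr_word:
  assumes x: "wo_word x" and S: "ofilter (fst x) S" and p: "p \<in> S"
  shows "underS (fst (restr_word x S)) p = underS (fst x) p"
  using S p unfolding ofilter_iff underS_def by auto

lemma restr_word_underS:
  assumes x: "wo_word x" and S: "ofilter (fst x) S" and p: "p \<in> S"
  shows "restr_word (restr_word x S) (underS (fst (restr_word x S)) p) = restr_word x (underS (fst x) p)"
proof -
  have "underS (fst x) p \<subseteq> S" using S p unfolding ofilter_iff underS_def by auto
  then show ?thesis using underS_restr_word[OF x S p] restr_word_restr_word by (metis inf.absorb2)
qed

section \<open>Lexicographic comparison by positions\<close>

definition pos_str_less :: "'a::linorder word \<Rightarrow> 'a word \<Rightarrow> bool" where
  "pos_str_less x y \<longleftrightarrow> (\<exists>p\<in>pos x. \<exists>q\<in>pos y. word_iso (restr_word x (underS (fst x) p))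
      (restr_word y (underS (fst y) q))
      \<and> snd x p < snd y q)"

definition pos_prefix :: "'a word \<Rightarrow> 'a word \<Rightarrow> bool" where
  "pos_prefix x y \<longleftrightarrow> word_iso x y \<or> (\<exists>q\<in>pos y. word_iso x (restr_word y (underS (fst y) q)))"

lemma pos_str_lessI: "p \<in> pos x \<Longrightarrow> q \<in> pos y \<Longrightarrow> word_iso (restr_word x (underS (fst x) p))
    (restr_word y (underS (fst y) q))
   \<Longrightarrow> snd x p < snd y q \<Longrightarrow> pos_str_less x y"
  unfolding pos_str_less_def by auto

lemma pos_prefix_iff_ofilter:
  assumes y: "wo_word y"
  shows "pos_prefix x y \<longleftrightarrow> (\<exists>S. ofilter (fst y) S \<and> word_iso x (restr_word y S))"
proof
  assume "pos_prefix x y"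
  then consider "word_iso x y" | q where "word_iso x (restr_word y (underS (fst y) q))"
    unfolding pos_prefix_def by blast
  then show "\<exists>S. ofilter (fst y) S \<and> word_iso x (restr_word y S)"
  proof cases
    case 1
    then show ?thesis using ofilter_Field[of "fst y"] by (intro exI[of _ "pos y"]) simp
  next
    case 2
    then show ?thesis using ofilter_underS[OF y] by blast
  qed
next
  assume "\<exists>S. ofilter (fst y) S \<and> word_iso x (restr_word y S)"
  then obtain S where S: "ofilter (fst y) S" "word_iso x (restr_word y S)" by blast
  have "(\<exists>q\<in>pos y. S = underS (fst y) q) \<or> S = pos y"
    using wo_rel.ofilter_underS_Field[of "fst y" S] S(1) y by (simp add: wo_rel_def)
  then show "pos_prefix x y" unfolding pos_prefix_def using S(2) by auto
qed

lemma pos_prefix_word_iso_l: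
  assumes i: "word_iso x x'" and p: "pos_prefix x y" shows "pos_prefix x' y"
proof -
  have i': "word_iso x' x" using word_iso_sym[OF i] .
  show ?thesis using p unfolding pos_prefix_def
  proof (elim disjE bexE)
    assume "word_iso x y" then show "word_iso x' y \<or>
        (\<exists>q\<in>pos y. word_iso x' (restr_word y (underS (fst y) q)))"
      using word_iso_trans[OF i'] by blast
  next
    fix q assume "q \<in> pos y" "word_iso x (restr_word y (underS (fst y) q))"
    then show "word_iso x' y \<or> (\<exists>q\<in>pos y. word_iso x' (restr_word y (underS (fst y) q)))"
      using word_iso_trans[OF i'] by blast
  qed
qed

lemma pos_prefix_word_iso_r:
  assumes y: "wo_word y" and f: "word_iso y y'" and p: "pos_prefix x y" shows "pos_prefix x y'"
proof -
  obtain g where g: "word_iso_by g y y'" using f word_iso_iff_by by blast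
  show ?thesis using p unfolding pos_prefix_def
  proof (elim disjE bexE)
    assume "word_iso x y" then show "word_iso x y' \<or>
        (\<exists>q\<in>pos y'. word_iso x (restr_word y' (underS (fst y') q)))"
      using f word_iso_trans by blast
  next
    fix q assume q: "q \<in> pos y" "word_iso x (restr_word y (underS (fst y) q))"
    have "word_iso x (restr_word y' (underS (fst y') (g q)))"
      using word_iso_by_init[OF g y q(1)] q(2) word_iso_trans by blast
    then show "word_iso x y' \<or> (\<exists>q\<in>pos y'. word_iso x (restr_word y' (underS (fst y') q)))"
      using word_iso_byD(4)[OF g q(1)] by blast
  qed
qed

lemma word_iso_by_ofilter_image:
  assumes y: "wo_word y" and z: "wo_word z" and T: "ofilter (fst z) T"
    and g: "word_iso_by g y (restr_word z T)" and S: "ofilter (fst y) S"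
  shows "ofilter (fst z) (g ` S)" and "word_iso (restr_word y S) (restr_word z (g ` S))"
proof -
  have S_pos: "S \<subseteq> pos y" and T_pos: "T \<subseteq> pos z" using ofilter_subset S T by blast+
  have pos_T: "pos (restr_word z T) = T" using pos_restr_word[OF z T_pos] .
  have gS: "g ` S \<subseteq> T" using word_iso_byD(4)[OF g] S_pos pos_T by auto
  show "word_iso (restr_word y S) (restr_word z (g ` S))"
    using word_iso_restr_word_image[OF g y S_pos] restr_word_restr_word gS by (metis inf.absorb2)
  show "ofilter (fst z) (g ` S)" unfolding ofilter_iff
  proof (intro conjI ballI allI impI)
    show "g ` S \<subseteq> pos z" using gS T_pos by blast
    fix a b assume a: "a \<in> g ` S" and ba: "(b, a) \<in> fst z"
    then obtain a0 where a0: "a0 \<in> S" "a = g a0" by blast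
    have aT: "a \<in> T" using a gS by blast
    then have bT: "b \<in> T" using ofilter_downD[OF T _ ba] by blast
    then obtain b0 where b0: "b0 \<in> pos y" "b = g b0" using word_iso_byD(6)[OF g] pos_T by auto
    have "(b0, a0) \<in> fst y" using word_iso_byD(2)[OF g b0(1)] a0 S_pos b0 ba aT bT by auto
    then show "b \<in> g ` S" using ofilter_downD[OF S a0(1)] b0 by blast
  qed
qed

lemma pos_prefix_trans:
  assumes y: "wo_word y" and z: "wo_word z" and xy: "pos_prefix x y" and yz: "pos_prefix y z"
  shows "pos_prefix x z"
proof -
  obtain S where S: "ofilter (fst y) S" "word_iso x (restr_word y S)"
    using xy pos_prefix_iff_ofilter[OF y] by blast
  obtain T where T: "ofilter (fst z) T" "word_iso y (restr_word z T)"
    using yz pos_prefix_iff_ofilter[OF z] by blast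
  obtain g where g: "word_iso_by g y (restr_word z T)" using T(2) word_iso_iff_by by blast
  note image = word_iso_by_ofilter_image[OF y z T(1) g S(1)]
  show ?thesis
    using pos_prefix_iff_ofilter[OF z] image(1) word_iso_trans[OF S(2) image(2)] by blast
qed

lemma pos_prefix_antisym:
  assumes x: "wo_word x" and y: "wo_word y" and xy: "pos_prefix x y" and yx: "pos_prefix y x"
  shows "word_iso x y"
proof -
  obtain S where S: "ofilter (fst y) S" "word_iso x (restr_word y S)"
    using xy pos_prefix_iff_ofilter[OF y] by blast
  obtain T where T: "ofilter (fst x) T" "word_iso y (restr_word x T)"
    using yx pos_prefix_iff_ofilter[OF x] by blast
  obtain g where g: "word_iso_by g y (restr_word x T)" using T(2) word_iso_iff_by by blast
  note image = word_iso_by_ofilter_image[OF y x T(1) g S(1)]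
  have "g ` S = pos x"
    using word_iso_ofilter_eq[OF x image(1) word_iso_trans[OF S(2) image(2)]] .
  moreover have "g ` S \<subseteq> T" "T \<subseteq> pos x"
    using word_iso_byD(4)[OF g] ofilter_subset[OF S(1)] ofilter_subset[OF T(1)]
      pos_restr_word[OF x ofilter_subset[OF T(1)]] by auto
  ultimately have "T = pos x" by blast
  then show ?thesis using T(2) word_iso_sym by simp
qed

lemma pos_str_less_word_iso:
  assumes x: "wo_word x" and y: "wo_word y" and s: "pos_str_less x y"
    and fx: "word_iso x x'" and fy: "word_iso y y'"
  shows "pos_str_less x' y'"
proof -
  obtain f where f: "word_iso_by f x x'" using fx word_iso_iff_by by blast
  obtain g where g: "word_iso_by g y y'" using fy word_iso_iff_by by blast
  obtain p q where p: "p \<in> pos x" and q: "q \<in> pos y" and less: "snd x p < snd y q"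
    and i: "word_iso (restr_word x (underS (fst x) p)) (restr_word y (underS (fst y) q))"
    using s pos_str_less_def by blast
  have "word_iso (restr_word x' (underS (fst x') (f p))) (restr_word y' (underS (fst y') (g q)))"
    using word_iso_trans[OF word_iso_trans[OF word_iso_sym[OF word_iso_by_init[OF f x p]] i]
        word_iso_by_init[OF g y q]] .
  moreover have "snd x' (f p) < snd y' (g q)"
    using less word_iso_byD(3)[OF f p] word_iso_byD(3)[OF g q] by simp
  ultimately show ?thesis
    using pos_str_lessI[OF word_iso_byD(4)[OF f p] word_iso_byD(4)[OF g q]] by blast
qed

lemma pos_str_less_ofilter_r:
  assumes y: "wo_word y" and S: "ofilter (fst y) S"
    and s: "pos_str_less x (restr_word y S)" shows "pos_str_less x y"
proof -
  have SF: "S \<subseteq> pos y" using ofilter_subset[OF S] by blast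
  obtain p q where pq: "p \<in> pos x" "q \<in> pos (restr_word y S)"
    "word_iso (restr_word x (underS (fst x) p)) (restr_word (restr_word y S)
        (underS (fst (restr_word y S)) q))"
    "snd x p < snd (restr_word y S) q" using s pos_str_less_def by blast
  have qS: "q \<in> S" using pq(2) pos_restr_word[OF y SF] by simp
  then show ?thesis unfolding pos_str_less_def using pq restr_word_underS[OF y S qS] SF by auto
qed

lemma pos_str_less_ofilter_l:
  assumes x: "wo_word x" and S: "ofilter (fst x) S"
    and s: "pos_str_less (restr_word x S) y" shows "pos_str_less x y"
proof -
  have SF: "S \<subseteq> pos x" using ofilter_subset[OF S] by blast
  obtain p q where pq: "p \<in> pos (restr_word x S)" "q \<in> pos y"
    "word_iso (restr_word (restr_word x S) (underS (fst (restr_word x S)) p))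
      (restr_word y (underS (fst y) q))"
    "snd (restr_word x S) p < snd y q" using s pos_str_less_def by blast
  have pS: "p \<in> S" using pq(1) pos_restr_word[OF x SF] by simp
  then show ?thesis unfolding pos_str_less_def using pq restr_word_underS[OF x S pS] SF by auto
qed

lemma pos_str_less_pos_prefix_r:
  assumes x: "wo_word x" and y: "wo_word y" and y': "wo_word y'" and s: "pos_str_less x y"
    and p: "pos_prefix y y'" shows "pos_str_less x y'"
proof -
  obtain S where S: "ofilter (fst y') S" "word_iso y (restr_word y' S)"
    using p pos_prefix_iff_ofilter[OF y'] by blast
  have "pos_str_less x (restr_word y' S)" using pos_str_less_word_iso[OF x y s word_iso_refl S(2)] .
  then show ?thesis using pos_str_less_ofilter_r[OF y' S(1)] by blast
qed

lemma pos_str_less_pos_prefix_l: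
  assumes x: "wo_word x" and y: "wo_word y" and x': "wo_word x'" and s: "pos_str_less x y"
    and p: "pos_prefix x x'" shows "pos_str_less x' y"
proof -
  obtain S where S: "ofilter (fst x') S" "word_iso x (restr_word x' S)"
    using p pos_prefix_iff_ofilter[OF x'] by blast
  have "pos_str_less (restr_word x' S) y" using pos_str_less_word_iso[OF x y s S(2) word_iso_refl] .
  then show ?thesis using pos_str_less_ofilter_l[OF x' S(1)] by blast
qed

lemma underS_word_iso_eq:
  assumes x: "wo_word x" and p: "p \<in> pos x" and q: "q \<in> pos x"
    and i: "word_iso (restr_word x (underS (fst x) p)) (restr_word x (underS (fst x) q))"
  shows "p = q"
proof (rule ccontr)
  assume "p \<noteq> q"
  have False if pq: "(p, q) \<in> fst x" "p \<noteq> q"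
    and i: "word_iso (restr_word x (underS (fst x) q)) (restr_word x (underS (fst x) p))" for p q
  proof -
    let ?X = "restr_word x (underS (fst x) q)"
    have X: "wo_word ?X" using Well_order_restr_word[OF x] .
    have pos_X: "pos ?X = underS (fst x) q" using pos_restr_word[OF x underS_subset_Field] .
    have p_X: "p \<in> pos ?X" using pq pos_X unfolding underS_def by auto
    have sub: "underS (fst x) p \<subseteq> pos ?X"
      using pq Well_order_trans[OF x] Well_order_antisym[OF x] pos_X unfolding underS_def by blast
    have "restr_word ?X (underS (fst x) p) = restr_word x (underS (fst x) p)"
      using sub pos_X restr_word_restr_word by (metis inf.absorb2)
    then obtain h where h: "word_iso_by h ?X (restr_word ?X (underS (fst x) p))"
      using i word_iso_iff_by by metis
    have "(p, h p) \<in> fst ?X" using word_iso_by_restr_inflationary[OF X sub h p_X] .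
    moreover have "h p \<in> underS (fst x) p"
      using word_iso_byD(4)[OF h p_X] pos_restr_word[OF X sub] by simp
    ultimately show False using Well_order_antisym[OF x] unfolding underS_def by auto
  qed
  then show False using Well_order_total[OF x p q] \<open>p \<noteq> q\<close> i word_iso_sym by blast
qed

lemma pos_str_less_irrefl:
  assumes x: "wo_word x" shows "\<not> pos_str_less x x"
proof
  assume "pos_str_less x x"
  then obtain p q where pq: "p \<in> pos x" "q \<in> pos x" "word_iso (restr_word x (underS (fst x) p))
      (restr_word x (underS (fst x) q))"
    "snd x p < snd x q" using pos_str_less_def by blast
  have "p = q" using underS_word_iso_eq[OF x pq(1,2,3)] .
  then show False using pq(4) by simp
qed

lemma word_iso_init_shorter:
  assumes y: "wo_word y" and z: "wo_word z"
    and i: "word_iso (restr_word y (underS (fst y) q)) (restr_word z (underS (fst z) s))"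
    and q': "(q', q) \<in> fst y" "q' \<noteq> q"
  obtains s' where "s' \<in> pos z" "snd z s' = snd y q'"
    "word_iso (restr_word y (underS (fst y) q')) (restr_word z (underS (fst z) s'))"
proof -
  let ?Y = "restr_word y (underS (fst y) q)" and ?Z = "restr_word z (underS (fst z) s)"
  obtain g where g: "word_iso_by g ?Y ?Z" using i word_iso_iff_by by blast
  have q'_under: "q' \<in> underS (fst y) q" using q' unfolding underS_def by auto
  then have q'_Y: "q' \<in> pos ?Y" using pos_restr_word[OF y underS_subset_Field] by simp
  have g_under: "g q' \<in> underS (fst z) s"
    using word_iso_byD(4)[OF g q'_Y] pos_restr_word[OF z underS_subset_Field] by simp
  have "word_iso (restr_word ?Y (underS (fst ?Y) q')) (restr_word ?Z (underS (fst ?Z) (g q')))"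
    using word_iso_by_init[OF g Well_order_restr_word[OF y] q'_Y] .
  then have "word_iso (restr_word y (underS (fst y) q')) (restr_word z (underS (fst z) (g q')))"
    using restr_word_underS[OF y ofilter_underS[OF y] q'_under] restr_word_underS[OF z ofilter_underS[OF z] g_under]
    by simp
  moreover have "snd z (g q') = snd y q'" using word_iso_byD(3)[OF g q'_Y] by simp
  moreover have "g q' \<in> pos z" using g_under by (rule subsetD[OF underS_subset_Field])
  ultimately show ?thesis using that by blast
qed

lemma pos_str_less_trans:
  assumes x: "wo_word x" and y: "wo_word y" and z: "wo_word z"
    and xy: "pos_str_less x y" and yz: "pos_str_less y z"
  shows "pos_str_less x z"
proof -
  obtain p q where p: "p \<in> pos x" and q: "q \<in> pos y" and pq: "snd x p < snd y q"
    and i: "word_iso (restr_word x (underS (fst x) p)) (restr_word y (underS (fst y) q))"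
    using xy pos_str_less_def by blast
  obtain q' s where q': "q' \<in> pos y" and s: "s \<in> pos z" and q's: "snd y q' < snd z s"
    and i': "word_iso (restr_word y (underS (fst y) q')) (restr_word z (underS (fst z) s))"
    using yz pos_str_less_def by blast
  consider "q = q'" | "(q, q') \<in> fst y" "q \<noteq> q'" | "(q', q) \<in> fst y" "q' \<noteq> q"
    using Well_order_total[OF y q q'] by blast
  then show ?thesis
  proof cases
    case 1
    then have "word_iso (restr_word x (underS (fst x) p)) (restr_word z (underS (fst z) s))"
      using word_iso_trans[OF i] i' by simp
    then show ?thesis using pos_str_lessI[OF p s] pq q's 1 by simp
  next
    case 2
    then obtain s' where "s' \<in> pos z" "snd z s' = snd y q"
      "word_iso (restr_word y (underS (fst y) q)) (restr_word z (underS (fst z) s'))"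
      using word_iso_init_shorter[OF y z i'] by blast
    then show ?thesis using pos_str_lessI[OF p _ word_iso_trans[OF i]] pq by simp
  next
    case 3
    then obtain p' where p': "p' \<in> pos x" "snd x p' = snd y q'"
      "word_iso (restr_word y (underS (fst y) q')) (restr_word x (underS (fst x) p'))"
      using word_iso_init_shorter[OF y x word_iso_sym[OF i]] by blast
    then show ?thesis
      using pos_str_lessI[OF p'(1) s word_iso_trans[OF word_iso_sym[OF p'(3)] i']] q's by simp
  qed
qed

lemma pos_str_less_not_pos_prefix: "wo_word x \<Longrightarrow> wo_word y \<Longrightarrow> pos_str_less x y \<Longrightarrow> pos_prefix y x \<Longrightarrow>
    False"
  using pos_str_less_pos_prefix_r pos_str_less_irrefl by blast

lemma letter_fst[simp]: "fst (letter a) = {(0, 0)}" by (simp add: letter_def)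
lemma letter_snd[simp]: "snd (letter a) n = a" by (simp add: letter_def)
lemma Well_order_letter: "wo_word (letter a)" using Well_order_ord_one by (simp add: ord_one_def)
lemma pos_letter[simp]: "pos (letter a) = {0}" by (simp add: Field_def)

lemma Well_order_conc: "wo_word x \<Longrightarrow> wo_word y \<Longrightarrow> wo_word (conc x y)"
  by (simp add: Well_order_rsum)

lemma pos_conc: "pos (conc x y) = inl_pos ` pos x \<union> inr_pos ` pos y" by (simp add: Field_rsum)

lemma ofilter_inl_pos: "ofilter (fst (conc x y)) (inl_pos ` pos x)"
  unfolding ofilter_iff
proof (intro conjI ballI allI impI)
  show "inl_pos ` pos x \<subseteq> pos (conc x y)" using pos_conc by auto
  fix a b assume a: "a \<in> inl_pos ` pos x" and ba: "(b, a) \<in> fst (conc x y)"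
  then obtain i where i: "a = inl_pos i" "i \<in> pos x" by blast
  show "b \<in> inl_pos ` pos x"
  proof (cases b rule: sum_code_cases)
    case (1 k) then show ?thesis using ba i by (auto intro: FieldI1)
  next
    case (2 k) then show ?thesis using ba i by auto
  qed
qed

lemma restr_word_conc_inl:
  assumes x: "wo_word x" and y: "wo_word y" and S: "S \<subseteq> pos x"
  shows "word_iso (restr_word (conc x y) (inl_pos ` S)) (restr_word x S)"
proof -
  have "restr_word (conc x y) (inl_pos ` S \<union> inr_pos ` {}) = conc (restr_word x S)
      (restr_word y {})"
    using restr_word_conc[OF x y S] by blast
  then have "restr_word (conc x y) (inl_pos ` S) = conc (restr_word x S) (restr_word y {})" by simp
  moreover have "pos (restr_word y {}) = {}" by (simp add: Field_def)
  ultimately show ?thesis using conc_empty_r by metis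
qed

lemma restr_word_conc_inr:
  assumes x: "wo_word x" and y: "wo_word y" and T: "T \<subseteq> pos y"
  shows "word_iso (restr_word (conc x y) (inr_pos ` T)) (restr_word y T)"
proof -
  have "restr_word (conc x y) (inl_pos ` {} \<union> inr_pos ` T) = conc (restr_word x {})
      (restr_word y T)"
    using restr_word_conc[OF x y _ T] by blast
  then have "restr_word (conc x y) (inr_pos ` T) = conc (restr_word x {}) (restr_word y T)" by simp
  moreover have "pos (restr_word x {}) = {}" by (simp add: Field_def)
  ultimately show ?thesis using conc_empty_l by metis
qed

lemma pos_prefix_conc:
  assumes x: "wo_word x" and y: "wo_word y" shows "pos_prefix x (conc x y)"
  using pos_prefix_iff_ofilter[OF Well_order_conc[OF x y]] ofilter_inl_pos restr_word_conc_inl[OF x y subset_refl, simplified] word_iso_sym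
    by blast

lemma word_iso_conc_ofilter:
  assumes y: "wo_word y" and S: "ofilter (fst y) S"
  shows "word_iso y (conc (restr_word y S) (restr_word y (pos y - S)))"
proof -
  have SF: "S \<subseteq> pos y" using ofilter_subset[OF S] by blast
  have "word_iso (conc (restr_word y S) (restr_word y (pos y - S)))
      (restr_word y (S \<union> (pos y - S)))"
  proof (rule conc_restr_word_iso[OF y SF])
    show "pos y - S \<subseteq> pos y" by blast
    fix a b assume a: "a \<in> S" and b: "b \<in> pos y - S"
    have "(b, a) \<notin> fst y" using ofilter_downD[OF S a] b by blast
    then show "(a, b) \<in> fst y \<and> a \<noteq> b" using Well_order_total[OF y] a b SF by blast
  qed
  moreover have "S \<union> (pos y - S) = pos y" using SF by blast
  ultimately show ?thesis using word_iso_sym by simp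
qed

lemma restr_word_singleton:
  assumes x: "wo_word x" and p: "p \<in> pos x" shows "word_iso (restr_word x {p}) (letter (snd x p))"
  unfolding word_iso_iff_by
proof (intro exI)
  have pF: "{p} \<subseteq> pos x" using p by simp
  have Fp: "pos (restr_word x {p}) = {p}" using pos_restr_word[OF x pF] .
  show "word_iso_by (\<lambda>_. 0) (restr_word x {p}) (letter (snd x p))"
    unfolding word_iso_by_def Fp using Well_order_refl[OF x p] by (auto simp: bij_betw_def)
qed

lemma word_iso_conc_init_final:
  assumes v: "wo_word v" and p: "p \<in> pos v"
  shows "word_iso v (conc (restr_word v (underS (fst v) p)) (restr_word v (above (fst v) p)))"
  using word_iso_conc_ofilter[OF v ofilter_underS[OF v], of p] Field_diff_underS[OF v p] by simp

lemma word_iso_conc_at: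
  assumes x: "wo_word x" and p: "p \<in> pos x"
  shows "word_iso x (conc (restr_word x (underS (fst x) p))
    (conc (letter (snd x p)) (restr_word x (aboveS (fst x) p))))"
proof -
  let ?A = "aboveS (fst x) p"
  have A: "?A \<subseteq> pos x" unfolding aboveS_def by (auto intro: FieldI2)
  have "word_iso (conc (restr_word x {p}) (restr_word x ?A)) (restr_word x ({p} \<union> ?A))"
    by (rule conc_restr_word_iso[OF x _ A]) (use p in \<open>auto simp: aboveS_def\<close>)
  moreover have "{p} \<union> ?A = above (fst x) p"
    unfolding above_def aboveS_def using Well_order_refl[OF x p] by auto
  ultimately have "word_iso (restr_word x (above (fst x) p)) (conc (letter (snd x p)) (restr_word x ?A))"
    using word_iso_trans[OF word_iso_sym word_iso_conc_l[OF restr_word_singleton[OF x p]]] by simp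
  then show ?thesis using word_iso_trans[OF word_iso_conc_init_final[OF x p] word_iso_conc_r] by blast
qed

lemma is_word_restr_word: "wo_word x \<Longrightarrow> is_word (restr_word x S)"
  unfolding is_word_def by (rule Well_order_restr_word)

lemma pos_str_less_imp_str_less:
  assumes x: "wo_word x" and y: "wo_word y" and s: "pos_str_less x y" shows "str_less x y"
proof -
  obtain p q where pq: "p \<in> pos x" "q \<in> pos y" "word_iso (restr_word x (underS (fst x) p))
      (restr_word y (underS (fst y) q))"
    "snd x p < snd y q" using s pos_str_less_def by blast
  let ?y0 = "restr_word x (underS (fst x) p)"
  have 1: "word_iso x (conc ?y0 (conc (letter (snd x p)) (restr_word x (aboveS (fst x) p))))"
    using word_iso_conc_at[OF x pq(1)] .
  have 2: "word_iso y (conc (restr_word y (underS (fst y) q)) (conc (letter (snd y q))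
      (restr_word y (aboveS (fst y) q))))"
    using word_iso_conc_at[OF y pq(2)] .
  have 3: "word_iso y (conc ?y0 (conc (letter (snd y q)) (restr_word y (aboveS (fst y) q))))"
    using 2 word_iso_conc_l[OF word_iso_sym[OF pq(3)]] word_iso_trans by blast
  show ?thesis
    unfolding str_less_def using pq(4) 1 3 is_word_restr_word[OF x] is_word_restr_word[OF y] by blast
qed

lemma conc_letter_init:
  fixes a :: "'a"
  assumes y0: "wo_word y0" and z: "wo_word z"
  defines "X \<equiv> conc y0 (conc (letter a) z)"
  shows "inr_pos (inl_pos 0) \<in> pos X" "snd X (inr_pos (inl_pos 0)) = a"
    "word_iso (restr_word X (underS (fst X) (inr_pos (inl_pos 0)))) y0"
proof -
  show "inr_pos (inl_pos 0) \<in> pos X" unfolding X_def pos_conc by simp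
  show "snd X (inr_pos (inl_pos 0)) = a" unfolding X_def by simp
  have lz: "wo_word (conc (letter a) z)" using Well_order_conc[OF Well_order_letter z] .
  have U: "underS (fst X) (inr_pos (inl_pos 0)) = inl_pos ` pos y0"
  proof (rule set_eqI)
    fix n show "n \<in> underS (fst X) (inr_pos (inl_pos 0)) \<longleftrightarrow> n \<in> inl_pos ` pos y0"
    proof (cases n rule: sum_code_cases)
      case (1 i)
      have "(inl_pos 0, inl_pos 0) \<in> rsum {(0, 0)} (fst z)" by simp
      then have "inl_pos 0 \<in> Field (rsum {(0, 0)} (fst z))" by (rule FieldI1)
      then show ?thesis using 1 unfolding X_def underS_def by auto
    next
      case (2 m)
      have "inr_pos m \<notin> underS (fst X) (inr_pos (inl_pos 0))"
      proof (cases m rule: sum_code_cases)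
        case (1 k) then show ?thesis unfolding X_def underS_def by auto
      next
        case (2 k) then show ?thesis unfolding X_def underS_def by auto
      qed
      then show ?thesis using 2 by auto
    qed
  qed
  show "word_iso (restr_word X (underS (fst X) (inr_pos (inl_pos 0)))) y0"
    unfolding U unfolding X_def using restr_word_conc_inl[OF y0 lz subset_refl] by simp
qed

lemma str_less_imp_pos_str_less:
  assumes x: "wo_word x" and y: "wo_word y" and s: "str_less x y" shows "pos_str_less x y"
proof -
  obtain a b y0 z z' where o: "a < b" "is_word y0" "is_word z" "is_word z'"
    "word_iso x (conc y0 (conc (letter a) z))" "word_iso y (conc y0 (conc (letter b) z'))"
    using s str_less_def by blast
  have w: "wo_word y0" "wo_word z" "wo_word z'" using o unfolding is_word_def by auto
  let ?X = "conc y0 (conc (letter a) z)" and ?Y = "conc y0 (conc (letter b) z')"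
  have X: "wo_word ?X" using Well_order_conc[OF w(1) Well_order_conc[OF Well_order_letter w(2)]] .
  have Y: "wo_word ?Y" using Well_order_conc[OF w(1) Well_order_conc[OF Well_order_letter w(3)]] .
  note iX = conc_letter_init[OF w(1) w(2), of a] and iY = conc_letter_init[OF w(1) w(3), of b]
  have "pos_str_less ?X ?Y"
  proof (rule pos_str_lessI[OF iX(1) iY(1)])
    show "word_iso (restr_word ?X (underS (fst ?X) (inr_pos (inl_pos 0))))
        (restr_word ?Y (underS (fst ?Y) (inr_pos (inl_pos 0))))"
      using word_iso_trans[OF iX(3) word_iso_sym[OF iY(3)]] .
    show "snd ?X (inr_pos (inl_pos 0)) < snd ?Y (inr_pos (inl_pos 0))"
      using iX(2) iY(2) o(1) by simp
  qed
  then show ?thesis using pos_str_less_word_iso[OF X Y] o(5,6) word_iso_sym by blast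
qed

lemma is_prefix_imp_pos_prefix:
  assumes x: "wo_word x" and y: "wo_word y" and p: "is_prefix x y" shows "pos_prefix x y"
proof -
  obtain z where z: "is_word z" "word_iso y (conc x z)" using p is_prefix_def by blast
  have zw: "wo_word z" using z is_word_def by blast
  show ?thesis using pos_prefix_word_iso_r[OF Well_order_conc[OF x zw] word_iso_sym[OF z(2)] pos_prefix_conc[OF x zw]] .
qed

lemma pos_prefix_imp_is_prefix:
  assumes y: "wo_word y" and p: "pos_prefix x y" shows "is_prefix x y"
proof -
  obtain S where S: "ofilter (fst y) S" "word_iso x (restr_word y S)"
    using p pos_prefix_iff_ofilter[OF y] by blast
  have "word_iso y (conc x (restr_word y (pos y - S)))"
    using word_iso_conc_ofilter[OF y S(1)] word_iso_conc_l[OF word_iso_sym[OF S(2)]] word_iso_trans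
      by blast
  then show ?thesis unfolding is_prefix_def using is_word_restr_word[OF y] by blast
qed

lemma lex_le_iff:
  assumes x: "wo_word x" and y: "wo_word y" shows "lex_le x y \<longleftrightarrow> pos_prefix x y \<or> pos_str_less x y"
proof
  assume "lex_le x y"
  then show "pos_prefix x y \<or> pos_str_less x y" unfolding lex_le_def
  proof
    assume "is_prefix x y" then show ?thesis using is_prefix_imp_pos_prefix[OF x y] by simp
  next
    assume "str_less x y" then show ?thesis using str_less_imp_pos_str_less[OF x y] by simp
  qed
next
  assume "pos_prefix x y \<or> pos_str_less x y"
  then show "lex_le x y" unfolding lex_le_def
  proof
    assume "pos_prefix x y" then show "is_prefix x y \<or> str_less x y"
      using pos_prefix_imp_is_prefix[OF y] by simp
  next
    assume "pos_str_less x y" then show "is_prefix x y \<or> str_less x y"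
      using pos_str_less_imp_str_less[OF x y] by simp
  qed
qed

lemma lex_le_word_iso_r:
  assumes l: "lex_le x y" and i: "word_iso y y'" shows "lex_le x y'"
  using l unfolding lex_le_def
proof
  assume "is_prefix x y"
  then obtain z where z: "is_word z" "word_iso y (conc x z)" unfolding is_prefix_def by blast
  have "word_iso y' (conc x z)" using word_iso_trans[OF word_iso_sym[OF i] z(2)] .
  then show "is_prefix x y' \<or> str_less x y'" unfolding is_prefix_def using z(1) by blast
next
  assume "str_less x y"
  then obtain a b y0 z z' where o: "a < b" "is_word y0" "is_word z" "is_word z'"
    "word_iso x (conc y0 (conc (letter a) z))" "word_iso y (conc y0 (conc (letter b) z'))"
    unfolding str_less_def by blast
  have "word_iso y' (conc y0 (conc (letter b) z'))"
    using word_iso_trans[OF word_iso_sym[OF i] o(6)] .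
  then have "str_less x y'" unfolding str_less_def using o(1-5) by blast
  then show "is_prefix x y' \<or> str_less x y'" by simp
qed

lemma prime_word_suffix:
  assumes pw: "prime_word w" and w: "wo_word w" and g: "g \<in> pos w"
    and ng: "i \<in> pos w" "(i, g) \<in> fst w" "i \<noteq> g"
  shows "pos_prefix w (restr_word w (above (fst w) g)) \<or>
      pos_str_less w (restr_word w (above (fst w) g))"
proof -
  have "proper_suffix (restr_word w (above (fst w) g)) w"
    unfolding proper_suffix_def using g ng by (auto simp: restr_word_def above_eq)
  then have "lex_le w (restr_word w (above (fst w) g))" using pw prime_word_def by blast
  then show ?thesis using lex_le_iff[OF w Well_order_restr_word[OF w]] by blast
qed

lemma proper_suffixE:
  assumes "proper_suffix z w"
  obtains g i where "g \<in> pos w" "i \<in> pos w" "(i, g) \<in> fst w" "i \<noteq> g"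
    "word_iso z (restr_word w (above (fst w) g))"
  using assms unfolding proper_suffix_def by (auto simp: restr_word_def above_eq)


lemma underS_rsum_inl: "underS (rsum r s) (inl_pos i) = inl_pos ` underS r i"
proof (rule set_eqI)
  fix n show "n \<in> underS (rsum r s) (inl_pos i) \<longleftrightarrow> n \<in> inl_pos ` underS r i"
    by (cases n rule: sum_code_cases) (auto simp: underS_def)
qed

lemma underS_rsum_inr:
  "j \<in> Field s \<Longrightarrow> underS (rsum r s) (inr_pos j) = inl_pos ` Field r \<union> inr_pos ` underS s j"
proof (rule set_eqI)
  fix n assume j: "j \<in> Field s"
  show "n \<in> underS (rsum r s) (inr_pos j) \<longleftrightarrow> n \<in> inl_pos ` Field r \<union> inr_pos ` underS s j"
    by (cases n rule: sum_code_cases) (auto simp: underS_def j)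
qed

lemma above_rsum_inl:
  "i \<in> Field r \<Longrightarrow> above (rsum r s) (inl_pos i) = inl_pos ` above r i \<union> inr_pos ` Field s"
proof (rule set_eqI)
  fix n assume i: "i \<in> Field r"
  show "n \<in> above (rsum r s) (inl_pos i) \<longleftrightarrow> n \<in> inl_pos ` above r i \<union> inr_pos ` Field s"
    by (cases n rule: sum_code_cases) (auto simp: above_eq i Field_rsum)
qed

lemma above_rsum_inr: "above (rsum r s) (inr_pos j) = inr_pos ` above s j"
proof (rule set_eqI)
  fix n
  show "n \<in> above (rsum r s) (inr_pos j) \<longleftrightarrow> n \<in> inr_pos ` above s j"
    by (cases n rule: sum_code_cases) (auto simp: above_eq Field_rsum)
qed

lemma underS_wpow:
  assumes u: "wo_word u" and a: "Well_order \<alpha>" and i: "i \<in> pos u" and b: "b \<in> Field \<alpha>"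
  shows "underS (fst (wpow u \<alpha>)) (pow_pos i b) =
    {pow_pos i' b' | i' b'. i' \<in> pos u \<and> b' \<in> underS \<alpha> b} \<union> (\<lambda>i'. pow_pos i' b) ` underS (fst u) i"
proof (rule set_eqI)
  fix n
  obtain j c where n: "n = pow_pos j c" by (rule prod_code_cases)
  show "n \<in> underS (fst (wpow u \<alpha>)) (pow_pos i b) \<longleftrightarrow>
    n \<in> {pow_pos i' b' | i' b'. i' \<in> pos u \<and> b' \<in> underS \<alpha> b} \<union> (\<lambda>i'. pow_pos i' b) ` underS (fst u) i"
    unfolding n using i b by (auto simp: underS_def intro: FieldI1)
qed

lemma above_wpow:
  assumes u: "wo_word u" and a: "Well_order \<alpha>" and i: "i \<in> pos u" and b: "b \<in> Field \<alpha>"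
  shows "above (fst (wpow u \<alpha>)) (pow_pos i b) =
    (\<lambda>i'. pow_pos i' b) ` above (fst u) i \<union> {pow_pos i' b' | i' b'. i' \<in> pos u \<and> b' \<in> aboveS \<alpha> b}"
proof (rule set_eqI)
  fix n
  obtain j c where n: "n = pow_pos j c" by (rule prod_code_cases)
  show "n \<in> above (fst (wpow u \<alpha>)) (pow_pos i b) \<longleftrightarrow>
    n \<in> (\<lambda>i'. pow_pos i' b) ` above (fst u) i \<union> {pow_pos i' b' | i' b'. i' \<in> pos u \<and> b' \<in> aboveS \<alpha> b}"
    unfolding n using i b u a by (auto simp: above_eq aboveS_def intro: FieldI2)
qed

lemma wpow_init:
  assumes u: "wo_word u" and a: "Well_order \<alpha>" and i: "i \<in> pos u" and b: "b \<in> Field \<alpha>"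
  shows "word_iso (restr_word (wpow u \<alpha>) (underS (fst (wpow u \<alpha>)) (pow_pos i b)))
     (conc (wpow u (Restr \<alpha> (underS \<alpha> b))) (restr_word u (underS (fst u) i)))"
proof -
  let ?S1 = "{pow_pos i' b' | i' b'. i' \<in> pos u \<and> b' \<in> underS \<alpha> b}"
    and ?S2 = "(\<lambda>i'. pow_pos i' b) ` underS (fst u) i"
  have W: "wo_word (wpow u \<alpha>)" using Well_order_wpow[OF u a] .
  have S1: "?S1 \<subseteq> pos (wpow u \<alpha>)"
    using u a underS_subset_Field by (auto dest: subsetD[OF underS_subset_Field])
  have S2: "?S2 \<subseteq> pos (wpow u \<alpha>)" using u a b by (auto dest: subsetD[OF underS_subset_Field])
  have 1: "word_iso (conc (restr_word (wpow u \<alpha>) ?S1) (restr_word (wpow u \<alpha>) ?S2))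
      (restr_word (wpow u \<alpha>) (?S1 \<union> ?S2))"
  proof (rule conc_restr_word_iso[OF W S1 S2])
    fix p q assume "p \<in> ?S1" "q \<in> ?S2"
    then show "(p, q) \<in> fst (wpow u \<alpha>) \<and> p \<noteq> q" using b by (auto simp: underS_def intro: FieldI1)
  qed
  have 2: "restr_word (wpow u \<alpha>) ?S1 = wpow u (Restr \<alpha> (underS \<alpha> b))"
    using restr_word_wpow[OF u a underS_subset_Field] .
  have 3: "word_iso (restr_word (wpow u \<alpha>) ?S2) (restr_word u (underS (fst u) i))"
    using restr_word_wpow_copy[OF u a underS_subset_Field b] .
  have 5: "word_iso (conc (restr_word (wpow u \<alpha>) ?S1) (restr_word (wpow u \<alpha>) ?S2))
     (conc (wpow u (Restr \<alpha> (underS \<alpha> b))) (restr_word u (underS (fst u) i)))"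
    using word_iso_conc_r[OF 3] 2 by simp
  show ?thesis unfolding underS_wpow[OF u a i b]
    using word_iso_trans[OF word_iso_sym[OF 1] 5] .
qed

lemma wpow_final:
  assumes u: "wo_word u" and a: "Well_order \<alpha>" and i: "i \<in> pos u" and b: "b \<in> Field \<alpha>"
  shows "word_iso (restr_word (wpow u \<alpha>) (above (fst (wpow u \<alpha>)) (pow_pos i b)))
     (conc (restr_word u (above (fst u) i)) (wpow u (Restr \<alpha> (aboveS \<alpha> b))))"
proof -
  let ?S1 = "(\<lambda>i'. pow_pos i' b) ` above (fst u) i"
    and ?S2 = "{pow_pos i' b' | i' b'. i' \<in> pos u \<and> b' \<in> aboveS \<alpha> b}"
  have AF: "aboveS \<alpha> b \<subseteq> Field \<alpha>" unfolding aboveS_def by (auto intro: FieldI2)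
  have W: "wo_word (wpow u \<alpha>)" using Well_order_wpow[OF u a] .
  have S1: "?S1 \<subseteq> pos (wpow u \<alpha>)" using u a b by (auto simp: above_eq)
  have S2: "?S2 \<subseteq> pos (wpow u \<alpha>)" using u a AF by auto
  have 1: "word_iso (conc (restr_word (wpow u \<alpha>) ?S1) (restr_word (wpow u \<alpha>) ?S2))
      (restr_word (wpow u \<alpha>) (?S1 \<union> ?S2))"
  proof (rule conc_restr_word_iso[OF W S1 S2])
    fix p q assume "p \<in> ?S1" "q \<in> ?S2"
    then show "(p, q) \<in> fst (wpow u \<alpha>) \<and> p \<noteq> q" using b AF by (auto simp: aboveS_def above_eq)
  qed
  have 2: "restr_word (wpow u \<alpha>) ?S2 = wpow u (Restr \<alpha> (aboveS \<alpha> b))"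
    using restr_word_wpow[OF u a AF] .
  have 3: "word_iso (restr_word (wpow u \<alpha>) ?S1) (restr_word u (above (fst u) i))"
    using restr_word_wpow_copy[OF u a above_Field b] .
  have 5: "word_iso (conc (restr_word (wpow u \<alpha>) ?S1) (restr_word (wpow u \<alpha>) ?S2))
     (conc (restr_word u (above (fst u) i)) (wpow u (Restr \<alpha> (aboveS \<alpha> b))))"
    using word_iso_conc_l[OF 3] 2 by simp
  show ?thesis unfolding above_wpow[OF u a i b]
    using word_iso_trans[OF word_iso_sym[OF 1] 5] .
qed

lemma restr_word_conc_underS_inl:
  assumes x: "wo_word x" and y: "wo_word y"
  shows "word_iso (restr_word (conc x y) (underS (fst (conc x y)) (inl_pos n))) (restr_word x (underS (fst x) n))"
  using restr_word_conc_inl[OF x y underS_subset_Field] underS_rsum_inl by simp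

lemma restr_word_conc_underS_inr:
  assumes x: "wo_word x" and y: "wo_word y" and n: "n \<in> pos y"
  shows "word_iso (restr_word (conc x y) (underS (fst (conc x y)) (inr_pos n)))
    (conc x (restr_word y (underS (fst y) n)))"
proof -
  have "restr_word (conc x y) (inl_pos ` pos x \<union> inr_pos ` underS (fst y) n)
      = conc (restr_word x (pos x)) (restr_word y (underS (fst y) n))"
    using restr_word_conc[OF x y subset_refl underS_subset_Field] .
  then show ?thesis using underS_rsum_inr[OF n] by simp
qed

lemma restr_word_conc_above_inr:
  assumes x: "wo_word x" and y: "wo_word y"
  shows "word_iso (restr_word (conc x y) (above (fst (conc x y)) (inr_pos n)))
      (restr_word y (above (fst y) n))"
  using restr_word_conc_inr[OF x y above_Field] above_rsum_inr by simp

lemma restr_word_conc_above_inl: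
  assumes x: "wo_word x" and y: "wo_word y" and n: "n \<in> pos x"
  shows "restr_word (conc x y) (above (fst (conc x y))
      (inl_pos n)) = conc (restr_word x (above (fst x) n)) y"
  using above_rsum_inl[OF n] restr_word_conc[OF x y above_Field subset_refl] by simp

lemma conc_init_at_right_min:
  assumes A: "wo_word A" and B: "wo_word B" and p: "p \<in> pos B" and pm: "underS (fst B) p = {}"
  shows "word_iso (restr_word (conc A B) (underS (fst (conc A B)) (inr_pos p))) A"
proof -
  have "underS (fst (conc A B)) (inr_pos p) = inl_pos ` pos A"
    using underS_rsum_inr[OF p] pm by simp
  then show ?thesis using restr_word_conc_inl[OF A B subset_refl] by simp
qed

lemma word_iso_restr_word_by_iso:
  assumes x: "wo_word x" and y: "wo_word y" and A: "A \<subseteq> pos y"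
    and f: "iso (fst x) (Restr (fst y) A) f"
    and S: "S \<subseteq> pos x" and l: "\<And>i. i \<in> S \<Longrightarrow> snd y (f i) = snd x i"
  shows "word_iso (restr_word x S) (restr_word y (f ` S))"
  unfolding word_iso_iff_by
proof (intro exI)
  have FA: "Field (Restr (fst y) A) = A" using Field_Restr_Well_order[OF y A] .
  have bf: "bij_betw f (pos x) A"
    and fo: "\<And>i j. i \<in> pos x \<Longrightarrow> j \<in> pos x \<Longrightarrow> (i, j) \<in> fst x \<longleftrightarrow> (f i, f j) \<in> Restr (fst y) A"
    using f FA unfolding iso_iff2 by auto
  have fA: "\<And>i. i \<in> pos x \<Longrightarrow> f i \<in> A" using bf bij_betwE by blast
  have fS: "f ` S \<subseteq> pos y" using fA S A by blast
  show "word_iso_by f (restr_word x S) (restr_word y (f ` S))"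
    unfolding word_iso_by_def pos_restr_word[OF x S] pos_restr_word[OF y fS]
  proof (intro conjI ballI)
    show "bij_betw f S (f ` S)" using bf S bij_betw_subset by blast
  next
    fix i j assume "i \<in> S" "j \<in> S"
    then show "(i, j) \<in> fst (restr_word x S) \<longleftrightarrow> (f i, f j) \<in> fst (restr_word y (f ` S))"
      using fo S fA by auto
  next
    fix i assume "i \<in> S" then show "snd (restr_word y (f ` S)) (f i) = snd (restr_word x S) i"
      using l by simp
  qed
qed

lemma embed_pos_lex_cases:
  assumes x: "wo_word x" and y: "wo_word y" and f: "embed (fst x) (fst y) f"
  shows "pos_prefix x y \<or> pos_str_less x y \<or> pos_str_less y x"
proof -
  let ?A = "f ` pos x"
  have A: "ofilter (fst y) ?A" using embed_Field_ofilter[OF x y f] .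
  have A_pos: "?A \<subseteq> pos y" using ofilter_subset[OF A] .
  have iso: "iso (fst x) (Restr (fst y) ?A) f" using embed_implies_iso_Restr[OF y x f] .
  show ?thesis
  proof (cases "\<forall>i\<in>pos x. snd y (f i) = snd x i")
    case True
    then have "word_iso x (restr_word y ?A)"
      using word_iso_restr_word_by_iso[OF x y A_pos iso subset_refl] by simp
    then show ?thesis using pos_prefix_iff_ofilter[OF y] A by blast
  next
    case False
    define D where "D = {p \<in> pos x. snd y (f p) \<noteq> snd x p}"
    obtain p where p: "p \<in> D" and least: "\<forall>q\<in>D. (p, q) \<in> fst x"
      using Well_order_has_min[OF x, of D] False unfolding D_def by blast
    have p_pos: "p \<in> pos x" and diff: "snd y (f p) \<noteq> snd x p" using p unfolding D_def by auto
    have agree: "snd y (f i) = snd x i" if "i \<in> underS (fst x) p" for i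
      using that least Well_order_antisym[OF x] unfolding D_def underS_def by (auto intro: FieldI1)
    have "f ` underS (fst x) p = underS (fst y) (f p)"
      using bij_betw_imp_surj_on[OF embed_underS[OF x f p_pos]] .
    then have i: "word_iso (restr_word x (underS (fst x) p)) (restr_word y (underS (fst y) (f p)))"
      using word_iso_restr_word_by_iso[OF x y A_pos iso underS_subset_Field[of "fst x" p] agree]
        by simp
    have "f p \<in> pos y" using p_pos A_pos by blast
    then show ?thesis
      using diff pos_str_lessI[OF p_pos _ i] pos_str_lessI[OF _ p_pos word_iso_sym[OF i]]
      by (cases "snd x p < snd y (f p)") auto
  qed
qed

lemma pos_lex_total:
  assumes x: "wo_word x" and y: "wo_word y"
  shows "pos_prefix x y \<or> pos_prefix y x \<or> pos_str_less x y \<or> pos_str_less y x"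
  using wellorders_totally_ordered[OF x y] embed_pos_lex_cases[OF x y] embed_pos_lex_cases[OF y x]
    by blast

lemma proper_suffix_conc:
  assumes v: "wo_word v" and A: "wo_word A" and B: "wo_word B" and An: "pos A \<noteq> {}"
    and Bn: "pos B \<noteq> {}"
    and i: "word_iso v (conc A B)"
  obtains g j where "g \<in> pos v" "j \<in> pos v" "(j, g) \<in> fst v" "j \<noteq> g"
    "word_iso (restr_word v (above (fst v) g)) B"
proof -
  let ?C = "conc A B"
  have C: "wo_word ?C" using Well_order_conc[OF A B] .
  obtain f where f: "word_iso_by f ?C v" using word_iso_sym[OF i] word_iso_iff_by by blast
  obtain m where m: "m \<in> pos B" "\<And>a. a \<in> pos B \<Longrightarrow> (m, a) \<in> fst B"
    using Well_order_minE[OF B Bn] by blast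
  obtain a where a: "a \<in> pos A" using An by blast
  have G: "inr_pos m \<in> pos ?C" and I: "inl_pos a \<in> pos ?C" using m a pos_conc by auto
  have above: "above (fst ?C) (inr_pos m) = inr_pos ` pos B"
    using above_rsum_inr above_min[of "fst B" m] m by simp
  have 1: "word_iso (restr_word ?C (above (fst ?C) (inr_pos m))) B" unfolding above
    using restr_word_conc_inr[OF A B subset_refl] by simp
  have 2: "word_iso (restr_word ?C (above (fst ?C) (inr_pos m)))
      (restr_word v (above (fst v) (f (inr_pos m))))"
    using word_iso_by_final[OF f C G] .
  have 3: "(f (inl_pos a), f (inr_pos m)) \<in> fst v" using word_iso_byD(2)[OF f I G] a m by simp
  have 4: "f (inl_pos a) \<noteq> f (inr_pos m)" using inj_onD[OF word_iso_byD(5)[OF f] _ I G] by auto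
  have 5: "word_iso (restr_word v (above (fst v) (f (inr_pos m)))) B"
    using word_iso_trans[OF word_iso_sym[OF 2] 1] .
  show ?thesis
    using that[OF word_iso_byD(4)[OF f G] word_iso_byD(4)[OF f I] 3 4 5] .
qed

section \<open>Prime words\<close>

lemma pos_str_less_wpow_ordLess:
  assumes u: "wo_word u" and x: "wo_word x" and t: "wo_word t" and t': "wo_word t'"
    and u_less_x: "pos_str_less u x" and \<tau>: "Well_order \<tau>" and \<sigma>\<tau>: "\<sigma> <o \<tau>"
  shows "pos_str_less (conc (wpow u \<tau>) (conc x t)) (conc (wpow u \<sigma>) (conc x t'))"
proof -
  obtain i j where i: "i \<in> pos u" and j: "j \<in> pos x" and less: "snd u i < snd x j"
    and init: "word_iso (restr_word u (underS (fst u) i)) (restr_word x (underS (fst x) j))"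
    using u_less_x unfolding pos_str_less_def by blast
  have \<sigma>: "Well_order \<sigma>" using \<sigma>\<tau> unfolding ordLess_def by blast
  obtain a where a: "a \<in> Field \<tau>" "\<sigma> =o Restr \<tau> (underS \<tau> a)"
    using ordLess_iff_ordIso_Restr[OF \<tau> \<sigma>] \<sigma>\<tau> by blast
  let ?L = "conc (wpow u \<tau>) (conc x t)" and ?R = "conc (wpow u \<sigma>) (conc x t')"
  have "word_iso (restr_word ?L (underS (fst ?L) (inl_pos (pow_pos i a))))
      (conc (wpow u (Restr \<tau> (underS \<tau> a))) (restr_word u (underS (fst u) i)))"
    using word_iso_trans[OF restr_word_conc_underS_inl[OF Well_order_wpow[OF u \<tau>] Well_order_conc[OF x t]]
        wpow_init[OF u \<tau> i a(1)]] .
  also have "word_iso \<dots> (conc (wpow u \<sigma>) (restr_word x (underS (fst x) j)))"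
    using word_iso_conc[OF wpow_ordIso[OF u ordIso_symmetric[OF a(2)]] init] .
  also have "word_iso \<dots> (restr_word ?R (underS (fst ?R) (inr_pos (inl_pos j))))"
  proof -
    have "inl_pos j \<in> pos (conc x t')" using j by (simp add: Field_rsum)
    from restr_word_conc_underS_inr[OF Well_order_wpow[OF u \<sigma>] Well_order_conc[OF x t'] this]
    show ?thesis using word_iso_trans word_iso_sym word_iso_conc_r[OF restr_word_conc_underS_inl[OF x t']] by blast
  qed
  finally have "word_iso (restr_word ?L (underS (fst ?L) (inl_pos (pow_pos i a))))
      (restr_word ?R (underS (fst ?R) (inr_pos (inl_pos j))))" .
  then show ?thesis
    by (rule pos_str_lessI[rotated 2]) (use i j a(1) u \<tau> less in \<open>auto simp: Field_rsum\<close>)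
qed

lemma prime_word_wo: "prime_word w \<Longrightarrow> wo_word w"
  unfolding prime_word_def primitive_def is_word_def by blast

lemma pos_wpow_empty: "pos (wpow u {}) = {}"
  unfolding wpow_def Field_def by auto

lemma primitive_nonempty:
  assumes p: "primitive x" shows "pos x \<noteq> {}"
proof
  assume e: "pos x = {}"
  have "word_iso x (wpow x {})" using word_iso_empty[OF e pos_wpow_empty] .
  moreover have "is_word x" using p primitive_def by blast
  moreover have "is_ord {}" unfolding is_ord_def by (rule Well_order_empty)
  ultimately have "ord_eq {} ord_one" using p unfolding primitive_def by blast
  then show False unfolding ord_eq_def word_iso_def ord_one_def
    by (auto simp: bij_betw_def Field_def)
qed

lemma primitive_not_wpow:
  assumes pv: "primitive v" and ne: "\<not> word_iso u v" and u: "wo_word u" and s: "Well_order \<sigma>"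
    and i: "word_iso v (wpow u \<sigma>)"
  shows False
proof -
  have "is_word u" "is_ord \<sigma>" using u s unfolding is_word_def is_ord_def by auto
  then have "word_iso u v" using pv i unfolding primitive_def by blast
  then show False using ne by simp
qed

lemma conc_final_init:
  assumes A: "wo_word A" and v: "wo_word v" and p: "p \<in> pos v"
  defines "X \<equiv> conc A (restr_word v (above (fst v) p))"
  shows "inr_pos p \<in> pos X" "snd X (inr_pos p) = snd v p"
    "word_iso (restr_word X (underS (fst X) (inr_pos p))) A"
proof -
  have gF: "above (fst v) p \<subseteq> pos v" by (rule above_Field)
  have Fs: "pos (restr_word v (above (fst v) p)) = above (fst v) p" using pos_restr_word[OF v gF] .
  have pg: "p \<in> above (fst v) p" unfolding above_eq using p Well_order_refl[OF v p] by simp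
  show "inr_pos p \<in> pos X" unfolding X_def pos_conc Fs using pg by simp
  show "snd X (inr_pos p) = snd v p" unfolding X_def by simp
  have "underS (fst (restr_word v (above (fst v) p))) p = {}"
    unfolding underS_def above_eq using Well_order_antisym[OF v] by auto
  then show "word_iso (restr_word X (underS (fst X) (inr_pos p))) A"
    unfolding X_def using conc_init_at_right_min[OF A Well_order_restr_word[OF v] _] Fs pg by simp
qed

lemma wpow_init_decomp:
  assumes u: "wo_word u" and v: "wo_word v" and \<rho>: "Well_order \<rho>"
    and g: "g \<in> pos u" and e: "e \<in> Field \<rho>" and p: "p \<in> pos v"
    and i: "word_iso (restr_word v (underS (fst v) p))
              (restr_word (wpow u \<rho>) (underS (fst (wpow u \<rho>)) (pow_pos g e)))"
  defines "x \<equiv> conc (restr_word u (underS (fst u) g)) (restr_word v (above (fst v) p))"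
  shows "word_iso v (conc (wpow u (Restr \<rho> (underS \<rho> e))) x)" and "wo_word x"
    and "inr_pos p \<in> pos x" and "snd x (inr_pos p) = snd v p"
    and "word_iso (restr_word x (underS (fst x) (inr_pos p))) (restr_word u (underS (fst u) g))"
proof -
  let ?\<eta> = "Restr \<rho> (underS \<rho> e)" and ?u' = "restr_word u (underS (fst u) g)"
  have "word_iso (restr_word v (underS (fst v) p)) (conc (wpow u ?\<eta>) ?u')"
    using word_iso_trans[OF i wpow_init[OF u \<rho> g e]] .
  then have "word_iso v (conc (conc (wpow u ?\<eta>) ?u') (restr_word v (above (fst v) p)))"
    using word_iso_trans[OF word_iso_conc_init_final[OF v p] word_iso_conc_l] by blast
  then show "word_iso v (conc (wpow u ?\<eta>) x)"
    unfolding x_def using word_iso_trans[OF _ conc_assoc] by blast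
  show "wo_word x" unfolding x_def using Well_order_conc Well_order_restr_word u v by blast
  show "inr_pos p \<in> pos x" "snd x (inr_pos p) = snd v p"
    "word_iso (restr_word x (underS (fst x) (inr_pos p))) ?u'"
    unfolding x_def using conc_final_init[OF Well_order_restr_word[OF u] v p] by auto
qed

lemma prime_word_primitive: "prime_word w \<Longrightarrow> primitive w"
  unfolding prime_word_def by blast

lemma pos_prefix_init: "q \<in> pos u \<Longrightarrow> pos_prefix (restr_word u (underS (fst u) q)) u"
  unfolding pos_prefix_def using word_iso_refl by blast

lemma not_pos_prefix_init:
  assumes u: "wo_word u" and q: "q \<in> pos u"
  shows "\<not> pos_prefix u (restr_word u (underS (fst u) q))"
  using pos_prefix_antisym[OF u Well_order_restr_word[OF u] _ pos_prefix_init[OF q]]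
    not_word_iso_underS[OF u q] by blast

lemma prime_word_conc_suffix:
  assumes pv: "prime_word v" and A: "wo_word A" and B: "wo_word B"
    and "pos A \<noteq> {}" and "pos B \<noteq> {}" and i: "word_iso v (conc A B)"
  shows "pos_prefix v B \<or> pos_str_less v B"
proof -
  have v: "wo_word v" using prime_word_wo[OF pv] .
  obtain g j where gj: "g \<in> pos v" "j \<in> pos v" "(j, g) \<in> fst v" "j \<noteq> g"
    and suffix: "word_iso (restr_word v (above (fst v) g)) B"
    using proper_suffix_conc[OF v A B assms(4,5) i] .
  have s: "wo_word (restr_word v (above (fst v) g))" using Well_order_restr_word[OF v] .
  show ?thesis
    using prime_word_suffix[OF pv v gj] pos_prefix_word_iso_r[OF s suffix]
      pos_str_less_word_iso[OF v s _ word_iso_refl suffix] by blast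
qed

lemma pos_prefix_wpow_word_iso:
  assumes u: "wo_word u" and un: "pos u \<noteq> {}" and v: "wo_word v"
    and pref: "pos_prefix (wpow u (fst v)) v"
  shows "word_iso (wpow u (fst v)) v"
proof -
  let ?U = "wpow u (fst v)"
  obtain S where S: "ofilter (fst v) S" "word_iso ?U (restr_word v S)"
    using pref pos_prefix_iff_ofilter[OF v] by blast
  obtain \<psi> where \<psi>: "word_iso_by \<psi> ?U (restr_word v S)" using S(2) word_iso_iff_by by blast
  have SF: "S \<subseteq> pos v" using ofilter_subset[OF S(1)] .
  have FS: "pos (restr_word v S) = S" using pos_restr_word[OF v SF] .
  obtain m where m: "m \<in> pos u" using un by blast
  \<comment> \<open>Taking the \<open>m\<close>-th letter of every copy embeds \<open>v\<close> strictly monotonically into \<open>S\<close>.\<close>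
  define h where "h b = \<psi> (pow_pos m b)" for b
  have hS: "\<And>b. b \<in> pos v \<Longrightarrow> h b \<in> S"
    unfolding h_def using word_iso_byD(4)[OF \<psi>] FS m u v by auto
  have "pos v \<subseteq> S"
  proof
    fix b assume b: "b \<in> pos v"
    have "(b, h b) \<in> fst v"
    proof (rule wo_inflationary[OF v _ _ b])
      show "\<And>a. a \<in> pos v \<Longrightarrow> h a \<in> pos v" using hS SF by blast
      fix a c assume ac: "a \<in> pos v" "c \<in> pos v" "(a, c) \<in> fst v" "a \<noteq> c"
      have mem: "pow_pos m a \<in> pos ?U" "pow_pos m c \<in> pos ?U" using m ac u v by auto
      have "(h a, h c) \<in> fst (restr_word v S)"
        unfolding h_def using word_iso_byD(2)[OF \<psi> mem] m ac by auto
      moreover have "h a \<noteq> h c"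
        unfolding h_def using inj_onD[OF word_iso_byD(5)[OF \<psi>] _ mem] ac(4) by auto
      ultimately show "(h a, h c) \<in> fst v \<and> h a \<noteq> h c" by auto
    qed
    then show "b \<in> S" using ofilter_downD[OF S(1) hS[OF b]] by blast
  qed
  then have "S = pos v" using SF by blast
  then show ?thesis using S(2) by simp
qed

context
  fixes u v :: "'a::linorder word"
  assumes prime_u: "prime_word u" and prime_v: "prime_word v"
    and u_prefix_v: "pos_prefix u v" and u_not_v: "\<not> word_iso u v"
begin

private lemma u_wo: "wo_word u"
  using prime_word_wo[OF prime_u] .

private lemma v_wo: "wo_word v"
  using prime_word_wo[OF prime_v] .

private lemma v_not_wpow: "Well_order \<sigma> \<Longrightarrow> \<not> word_iso v (wpow u \<sigma>)"
  using primitive_not_wpow[OF prime_word_primitive[OF prime_v] u_not_v u_wo] by blast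

lemma not_pos_prefix_wpow: "\<not> pos_prefix v (wpow u (fst v))"
proof
  let ?U = "wpow u (fst v)"
  assume pref: "pos_prefix v ?U"
  obtain q where q: "q \<in> pos ?U" "word_iso v (restr_word ?U (underS (fst ?U) q))"
    using pref v_not_wpow[OF v_wo] unfolding pos_prefix_def by blast
  then obtain g e where ge: "q = pow_pos g e" "g \<in> pos u" "e \<in> pos v"
    using Field_wpow[OF u_wo v_wo] by blast
  define \<eta> where "\<eta> = Restr (fst v) (underS (fst v) e)"
  define u' where "u' = restr_word u (underS (fst u) g)"
  have \<eta>: "Well_order \<eta>" and u': "wo_word u'"
    unfolding \<eta>_def u'_def using Well_order_Restr[OF v_wo] Well_order_restr_word[OF u_wo] .
  have v_decomp: "word_iso v (conc (wpow u \<eta>) u')"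
    unfolding \<eta>_def u'_def
      using word_iso_trans[OF q(2)[unfolded ge(1)] wpow_init[OF u_wo v_wo ge(2,3)]] .
  have u'_prefix_u: "pos_prefix u' u" and u_not_prefix_u': "\<not> pos_prefix u u'"
    unfolding u'_def using pos_prefix_init[OF ge(2)] not_pos_prefix_init[OF u_wo ge(2)] .
  have "pos u' \<noteq> {}"
  proof
    assume "pos u' = {}"
    then have "word_iso v (wpow u \<eta>)" using word_iso_trans[OF v_decomp conc_empty_r] by blast
    then show False using v_not_wpow[OF \<eta>] by blast
  qed
  moreover have "pos (wpow u \<eta>) \<noteq> {}"
  proof
    assume "pos (wpow u \<eta>) = {}"
    then have "word_iso v u'" using word_iso_trans[OF v_decomp conc_empty_l] by blast
    then show False using pos_prefix_word_iso_r[OF v_wo _ u_prefix_v] u_not_prefix_u' by blast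
  qed
  ultimately have "pos_prefix v u' \<or> pos_str_less v u'"
    using prime_word_conc_suffix[OF prime_v Well_order_wpow[OF u_wo \<eta>] u' _ _ v_decomp] by blast
  then show False
  proof
    assume "pos_prefix v u'"
    then show False using pos_prefix_trans[OF v_wo u' u_prefix_v] u_not_prefix_u' by blast
  next
    assume "pos_str_less v u'"
    moreover have "pos_prefix u' v" using pos_prefix_trans[OF u_wo v_wo u'_prefix_u u_prefix_v] .
    ultimately show False using pos_str_less_not_pos_prefix[OF v_wo u'] by blast
  qed
qed

lemma not_pos_str_less_wpow: "\<not> pos_str_less v (wpow u (fst v))"
proof
  let ?U = "wpow u (fst v)"
  assume "pos_str_less v ?U"
  then obtain p q where p: "p \<in> pos v" and q: "q \<in> pos ?U" and less: "snd v p < snd ?U q"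
    and i: "word_iso (restr_word v (underS (fst v) p)) (restr_word ?U (underS (fst ?U) q))"
    unfolding pos_str_less_def by blast
  obtain g e where ge: "q = pow_pos g e" "g \<in> pos u" "e \<in> pos v"
    using q Field_wpow[OF u_wo v_wo] by blast
  define \<eta> where "\<eta> = Restr (fst v) (underS (fst v) e)"
  define x where "x = conc (restr_word u (underS (fst u) g)) (restr_word v (above (fst v) p))"
  note x = wpow_init_decomp[OF u_wo v_wo v_wo ge(2,3) p i[unfolded ge(1)], folded \<eta>_def x_def]
  have \<eta>: "Well_order \<eta>" unfolding \<eta>_def using Well_order_Restr[OF v_wo] .
  have x_less_u: "pos_str_less x u"
    using pos_str_lessI[OF x(3) ge(2) x(5)] x(4) less ge(1) by simp
  have v_not_less_u: "\<not> pos_str_less v u"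
    using pos_str_less_not_pos_prefix[OF v_wo u_wo _ u_prefix_v] by blast
  have "pos (wpow u \<eta>) \<noteq> {}"
  proof
    assume "pos (wpow u \<eta>) = {}"
    then have "word_iso x v" using word_iso_sym[OF word_iso_trans[OF x(1) conc_empty_l]] by blast
    then show False using pos_str_less_word_iso[OF x(2) u_wo x_less_u _ word_iso_refl] v_not_less_u
      by blast
  qed
  then have "pos_prefix v x \<or> pos_str_less v x"
    using prime_word_conc_suffix[OF prime_v Well_order_wpow[OF u_wo \<eta>] x(2) _ _ x(1)] x(3) by blast
  then show False
  proof
    assume "pos_prefix v x"
    moreover have "pos_str_less x v"
      using pos_str_less_pos_prefix_r[OF x(2) u_wo v_wo x_less_u u_prefix_v] .
    ultimately show False using pos_str_less_not_pos_prefix[OF x(2) v_wo] by blast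
  next
    assume "pos_str_less v x"
    then show False using pos_str_less_trans[OF v_wo x(2) u_wo _ x_less_u] v_not_less_u by blast
  qed
qed

lemma pos_prefix_decomp:
  "\<exists>\<eta> x. Well_order \<eta> \<and> wo_word x \<and> word_iso v (conc (wpow u \<eta>) x) \<and> pos_str_less u x"
proof -
  let ?U = "wpow u (fst v)"
  have U: "wo_word ?U" using Well_order_wpow[OF u_wo v_wo] .
  have "\<not> pos_prefix ?U v"
    using pos_prefix_wpow_word_iso[OF u_wo _ v_wo] v_not_wpow[OF v_wo]
      primitive_nonempty[OF prime_word_primitive[OF prime_u]] word_iso_sym by blast
  then have "pos_str_less ?U v"
    using pos_lex_total[OF v_wo U] not_pos_prefix_wpow not_pos_str_less_wpow by blast
  then obtain q p where q: "q \<in> pos ?U" and p: "p \<in> pos v" and less: "snd ?U q < snd v p"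
    and i: "word_iso (restr_word ?U (underS (fst ?U) q)) (restr_word v (underS (fst v) p))"
    unfolding pos_str_less_def by blast
  obtain g e where ge: "q = pow_pos g e" "g \<in> pos u" "e \<in> pos v"
    using q Field_wpow[OF u_wo v_wo] by blast
  note x = wpow_init_decomp[OF u_wo v_wo v_wo ge(2,3) p word_iso_sym[OF i[unfolded ge(1)]]]
  have "pos_str_less u (conc (restr_word u (underS (fst u) g)) (restr_word v (above (fst v) p)))"
    using pos_str_lessI[OF ge(2) x(3) word_iso_sym[OF x(5)]] x(4) less ge(1) by simp
  then show ?thesis using x(1,2) Well_order_Restr[OF v_wo] by blast
qed

end

lemma prime_lex_less_decomp:
  assumes pu: "prime_word u" and pv: "prime_word v" and lex: "lex_le u v" and ne: "\<not> word_iso u v"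
  shows "\<exists>\<eta> x. Well_order \<eta> \<and> wo_word x \<and> word_iso v (conc (wpow u \<eta>) x) \<and> pos_str_less u x"
proof (cases "pos_str_less u v")
  case True
  have "word_iso v (conc (wpow u {}) v)" using word_iso_sym[OF conc_empty_l[OF pos_wpow_empty]] .
  then show ?thesis using True Well_order_empty prime_word_wo[OF pv] by blast
next
  case False
  then have "pos_prefix u v"
    using lex lex_le_iff[OF prime_word_wo[OF pu] prime_word_wo[OF pv]] by blast
  then show ?thesis using pos_prefix_decomp[OF pu pv _ ne] by blast
qed

lemma wpow_unfold:
  assumes v: "wo_word v" and b: "Well_order \<beta>"
    and c0: "c0 \<in> Field \<beta>" "\<And>c. c \<in> Field \<beta> \<Longrightarrow> (c0, c) \<in> \<beta>"
  shows "word_iso (wpow v \<beta>) (conc v (wpow v (Restr \<beta> (Field \<beta> - {c0}))))"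
proof -
  have 1: "word_iso (conc (wpow v (Restr \<beta> {c0})) (wpow v (Restr \<beta> (Field \<beta> - {c0}))))
      (wpow v (Restr \<beta> ({c0} \<union> (Field \<beta> - {c0}))))"
    by (rule conc_wpow_Restr[OF v b]) (use c0 in auto)
  have 2: "Restr \<beta> ({c0} \<union> (Field \<beta> - {c0})) = \<beta>"
    using c0(1) Restr_Field[of \<beta>] by (simp add: insert_absorb)
  have 3: "word_iso (conc (wpow v (Restr \<beta> {c0})) (wpow v (Restr \<beta> (Field \<beta> - {c0}))))
      (conc v (wpow v (Restr \<beta> (Field \<beta> - {c0}))))"
    using word_iso_conc_l[OF wpow_singleton[OF v b c0(1)]] .
  show ?thesis using word_iso_trans[OF word_iso_sym[OF 1[unfolded 2]] 3] .
qed

lemma rsum_Restr: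
  assumes a: "Well_order \<alpha>" and A: "A \<subseteq> Field \<alpha>" and e: "Well_order \<eta>"
  shows "rsum (Restr \<alpha> A) \<eta> = Restr (rsum \<alpha> \<eta>) (inl_pos ` A \<union> inr_pos ` Field \<eta>)"
proof -
  have FA: "Field (Restr \<alpha> A) = A" using Field_Restr_Well_order[OF a A] .
  show ?thesis
  proof (rule set_eqI)
    fix p :: "nat \<times> nat"
    obtain n m where p: "p = (n, m)" by fastforce
    show "p \<in> rsum (Restr \<alpha> A) \<eta> \<longleftrightarrow> p \<in> Restr (rsum \<alpha> \<eta>) (inl_pos ` A \<union> inr_pos ` Field \<eta>)"
      unfolding p
      by (cases n rule: sum_code_cases; cases m rule: sum_code_cases) (use A FA in \<open>auto intro: FieldI1 FieldI2\<close>)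
  qed
qed

lemma pos_prefix_restr_word_iso:
  assumes u: "wo_word u" and T: "T \<subseteq> pos u" and p: "pos_prefix u (restr_word u T)"
  shows "word_iso u (restr_word u T)"
proof -
  have uT: "wo_word (restr_word u T)" using Well_order_restr_word[OF u] .
  obtain S where S: "ofilter (fst (restr_word u T)) S" "word_iso u (restr_word (restr_word u T) S)"
    using p pos_prefix_iff_ofilter[OF uT] by blast
  have ST: "S \<subseteq> T" using ofilter_subset[OF S(1)] pos_restr_word[OF u T] by simp
  have eq: "restr_word (restr_word u T) S = restr_word u S"
    using restr_word_restr_word ST by (metis inf.absorb2)
  obtain \<psi> where \<psi>: "word_iso_by \<psi> u (restr_word u S)" using S(2) eq word_iso_iff_by by metis
  have "T \<subseteq> S"
  proof
    fix b assume b: "b \<in> T"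
    have S_pos: "S \<subseteq> pos u" using ST T by blast
    have "\<psi> b \<in> S" using word_iso_byD(4)[OF \<psi>] b T pos_restr_word[OF u S_pos] by blast
    moreover have "(b, \<psi> b) \<in> fst (restr_word u T)"
      using word_iso_by_restr_inflationary[OF u S_pos \<psi>] b T ST calculation by auto
    ultimately show "b \<in> S" using ofilter_downD[OF S(1)] by blast
  qed
  then show ?thesis using S(2) eq ST by (simp add: subset_antisym)
qed

lemma prime_word_suffix_cases:
  assumes pu: "prime_word u" and i: "i \<in> pos u"
  shows "pos_str_less u (restr_word u (above (fst u) i)) \<or>
      word_iso (restr_word u (above (fst u) i)) u"
proof (cases "\<exists>k\<in>pos u. (k, i) \<in> fst u \<and> k \<noteq> i")
  case True
  have u: "wo_word u" using prime_word_wo[OF pu] .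
  from True obtain k where "k \<in> pos u" "(k, i) \<in> fst u" "k \<noteq> i" by blast
  then show ?thesis
    using prime_word_suffix[OF pu u i] pos_prefix_restr_word_iso[OF u above_Field] word_iso_sym
      by blast
next
  case False
  then show ?thesis using above_eq_Field[OF prime_word_wo[OF pu] i] by simp
qed

lemma ord_eq_ord_one:
  assumes g: "Well_order \<gamma>" and e: "Field \<gamma> = {e0}" shows "ord_eq \<gamma> ord_one"
  unfolding ord_eq_def word_iso_def
proof (intro exI conjI ballI)
  show "bij_betw (\<lambda>_. 0) (Field (fst (\<gamma>, \<lambda>_. ()))) (Field (fst (ord_one, \<lambda>_. ())))"
    using e Field_ord_one by (auto simp: bij_betw_def)
  fix i j assume "i \<in> Field (fst (\<gamma>, \<lambda>_. ()))" "j \<in> Field (fst (\<gamma>, \<lambda>_. ()))"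
  then show "(i, j) \<in> fst (\<gamma>, \<lambda>_. ()) \<longleftrightarrow> (0, 0) \<in> fst (ord_one, \<lambda>_. ())"
    using e Well_order_refl[OF g, of e0] by (auto simp: ord_one_def)
qed simp

lemma ofilter_wpow:
  assumes y: "wo_word y" and \<gamma>: "Well_order \<gamma>" and J: "ofilter \<gamma> J"
  shows "ofilter (fst (wpow y \<gamma>)) {pow_pos i b | i b. i \<in> pos y \<and> b \<in> J}"
  unfolding ofilter_iff
proof (intro conjI ballI allI impI)
  show "{pow_pos i b | i b. i \<in> pos y \<and> b \<in> J} \<subseteq> pos (wpow y \<gamma>)"
    using Field_wpow[OF y \<gamma>] ofilter_subset[OF J] by blast
  fix n m assume n: "n \<in> {pow_pos i b | i b. i \<in> pos y \<and> b \<in> J}" and mn: "(m, n) \<in> fst (wpow y \<gamma>)"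
  obtain i b where ib: "n = pow_pos i b" "i \<in> pos y" "b \<in> J" using n by blast
  obtain i' b' where m: "m = pow_pos i' b'" by (rule prod_code_cases)
  have "i' \<in> pos y" "(b', b) \<in> \<gamma>" using mn ib m Well_order_refl[OF \<gamma>] by auto
  then show "m \<in> {pow_pos i b | i b. i \<in> pos y \<and> b \<in> J}" using ofilter_downD[OF J ib(3)] m by blast
qed

lemma pos_prefix_wpow_Restr:
  assumes y: "wo_word y" and \<gamma>: "Well_order \<gamma>" and J: "J \<subseteq> Field \<gamma>"
  shows "pos_prefix (wpow y (Restr \<gamma> J)) (wpow y \<gamma>)"
proof -
  obtain K where K: "ofilter \<gamma> K" "Restr \<gamma> J =o Restr \<gamma> K"
    using ordLeq_ofilter[OF \<gamma> Restr_ordLeq[OF \<gamma> J]] by blast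
  have "word_iso (wpow y (Restr \<gamma> J)) (restr_word (wpow y \<gamma>) {pow_pos i b | i b. i \<in> pos y \<and>
      b \<in> K})"
    using wpow_ordIso[OF y K(2)] restr_word_wpow[OF y \<gamma> ofilter_subset[OF K(1)]] by simp
  then show ?thesis
    using pos_prefix_iff_ofilter[OF Well_order_wpow[OF y \<gamma>]] ofilter_wpow[OF y \<gamma> K(1)] by blast
qed

lemma pos_prefix_base_wpow:
  assumes y: "wo_word y" and \<gamma>: "Well_order \<gamma>" and e: "e \<in> Field \<gamma>"
  shows "pos_prefix y (wpow y \<gamma>)"
  using pos_prefix_word_iso_l[OF wpow_singleton[OF y \<gamma> e] pos_prefix_wpow_Restr[OF y \<gamma>]] e by blast

lemma restr_word_wpow_above_copy:
  assumes y: "wo_word y" and \<gamma>: "Well_order \<gamma>"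
    and m: "m \<in> pos y" "\<And>a. a \<in> pos y \<Longrightarrow> (m, a) \<in> fst y" and e: "e \<in> Field \<gamma>"
  shows "restr_word (wpow y \<gamma>) (above (fst (wpow y \<gamma>))
      (pow_pos m e)) = wpow y (Restr \<gamma> (above \<gamma> e))"
proof -
  have "above (fst y) m = pos y" by (rule above_min, rule m(2))
  moreover have "above \<gamma> e = insert e (aboveS \<gamma> e)"
    unfolding above_def aboveS_def using Well_order_refl[OF \<gamma> e] by auto
  ultimately have "above (fst (wpow y \<gamma>)) (pow_pos m e) = {pow_pos i b | i b. i \<in> pos y \<and>
      b \<in> above \<gamma> e}"
    using above_wpow[OF y \<gamma> m(1) e] by auto
  then show ?thesis using restr_word_wpow[OF y \<gamma> above_Field] by simp
qed

lemma wpow_not_word_iso_base: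
  assumes y: "wo_word y" and yn: "pos y \<noteq> {}" and \<gamma>: "Well_order \<gamma>"
    and e0: "e0 \<in> Field \<gamma>" "\<And>a. a \<in> Field \<gamma> \<Longrightarrow> (e0, a) \<in> \<gamma>" and e: "e \<in> Field \<gamma>" "e \<noteq> e0"
  shows "\<not> word_iso (wpow y \<gamma>) y"
proof
  assume iso: "word_iso (wpow y \<gamma>) y"
  let ?C = "{pow_pos i b | i b. i \<in> pos y \<and> b \<in> {e0}}"
  have "ofilter \<gamma> {e0}"
    unfolding ofilter_iff using e0 Well_order_antisym[OF \<gamma>] by (auto intro: FieldI1)
  then have C: "ofilter (fst (wpow y \<gamma>)) ?C" by (rule ofilter_wpow[OF y \<gamma>])
  have "word_iso y (restr_word (wpow y \<gamma>) ?C)"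
    using word_iso_sym[OF wpow_singleton[OF y \<gamma> e0(1)]] restr_word_wpow[OF y \<gamma>, of "{e0}"] e0(1)
      by simp
  then have "?C = pos (wpow y \<gamma>)"
    using word_iso_ofilter_eq[OF Well_order_wpow[OF y \<gamma>] C] word_iso_trans[OF iso] by blast
  moreover obtain m where "m \<in> pos y" using yn by blast
  ultimately have "pow_pos m e \<in> ?C" using e(1) y \<gamma> by simp
  then show False using e(2) by (auto simp: prod_encode_eq)
qed

lemma word_iso_by_suffix_at_copy:
  assumes W: "wo_word W" and y: "wo_word y" and \<gamma>: "Well_order \<gamma>"
    and f: "word_iso_by f W (wpow y \<gamma>)"
    and m: "m \<in> pos y" "\<And>a. a \<in> pos y \<Longrightarrow> (m, a) \<in> fst y"
    and g: "g \<in> pos W" "f g = pow_pos m e" and e: "e \<in> Field \<gamma>"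
  shows "word_iso (restr_word W (above (fst W) g)) (wpow y (Restr \<gamma> (above \<gamma> e)))"
  using word_iso_by_final[OF f W g(1)] restr_word_wpow_above_copy[OF y \<gamma> m e] g(2) by simp

text \<open>A suffix starting at the beginning of a copy of \<open>y\<close> in \<open>y\<^sup>\<gamma>\<close> is a prefix of \<open>y\<^sup>\<gamma>\<close>, hence
  not strictly greater; so if all suffixes after \<open>g0\<close> are strictly greater, the copy
  containing \<open>g0\<close> is the last one.\<close>

lemma last_copy_if_suffixes_greater:
  assumes W: "wo_word W" and y: "wo_word y" and \<gamma>: "Well_order \<gamma>"
    and f: "word_iso_by f W (wpow y \<gamma>)"
    and m: "m \<in> pos y" "\<And>a. a \<in> pos y \<Longrightarrow> (m, a) \<in> fst y"
    and g0: "g0 \<in> pos W" "f g0 = pow_pos k e"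
    and after_g0: "\<And>g. g \<in> pos W \<Longrightarrow> (g0, g) \<in> fst W \<Longrightarrow>
        pos_str_less W (restr_word W (above (fst W) g))"
    and ee': "(e, e') \<in> \<gamma>"
  shows "e' = e"
proof (rule ccontr)
  assume "e' \<noteq> e"
  let ?Y = "wpow y \<gamma>"
  have Y: "wo_word ?Y" using Well_order_wpow[OF y \<gamma>] .
  have iso: "word_iso W ?Y" using f word_iso_iff_by by blast
  have e': "e' \<in> Field \<gamma>" using ee' by (rule FieldI2)
  have "pow_pos m e' \<in> pos ?Y" using m(1) e' y \<gamma> by simp
  then obtain g where g: "g \<in> pos W" "f g = pow_pos m e'"
    using word_iso_byD(6)[OF f] by (metis imageE)
  have "f g0 \<in> pos ?Y" using word_iso_byD(4)[OF f g0(1)] .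
  then have "(f g0, f g) \<in> fst ?Y" "f g0 \<noteq> f g" using g0(2) g(2) ee' \<open>e' \<noteq> e\<close> m(1) e' y \<gamma> by auto
  then have "(g0, g) \<in> fst W" using word_iso_byD(2)[OF f g0(1) g(1)] by blast
  then have less: "pos_str_less W (restr_word W (above (fst W) g))" using after_g0[OF g(1)] by blast
  have "pos_prefix (restr_word W (above (fst W) g)) W"
    using pos_prefix_word_iso_l[OF word_iso_sym[OF word_iso_by_suffix_at_copy[OF W y \<gamma> f m g e']]
        pos_prefix_word_iso_r[OF Y word_iso_sym[OF iso]
          pos_prefix_wpow_Restr[OF y \<gamma> above_Field]]] .
  then show False using pos_str_less_not_pos_prefix[OF W Well_order_restr_word[OF W] less] by blast
qed

lemma primitive_if_suffixes:
  assumes W: "wo_word W" and g0: "g0 \<in> pos W"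
    and suffixes: "\<And>g i. g \<in> pos W \<Longrightarrow> i \<in> pos W \<Longrightarrow> (i, g) \<in> fst W \<Longrightarrow> i \<noteq> g \<Longrightarrow>
      pos_str_less W (restr_word W (above (fst W) g)) \<or> word_iso W (restr_word W (above (fst W) g))"
    and after_g0: "\<And>g. g \<in> pos W \<Longrightarrow> (g0, g) \<in> fst W \<Longrightarrow>
        pos_str_less W (restr_word W (above (fst W) g))"
  shows "primitive W"
  unfolding primitive_def
proof (intro conjI allI impI)
  show "is_word W" using W unfolding is_word_def .
  fix y \<gamma> assume "is_word y \<and> is_ord \<gamma> \<and> word_iso W (wpow y \<gamma>)"
  then have y: "wo_word y" and \<gamma>: "Well_order \<gamma>" and iso: "word_iso W (wpow y \<gamma>)"
    unfolding is_word_def is_ord_def by auto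
  let ?Y = "wpow y \<gamma>" and ?suffix = "\<lambda>g. restr_word W (above (fst W) g)"
  obtain f where f: "word_iso_by f W ?Y" using iso word_iso_iff_by by blast
  obtain k e where ke: "f g0 = pow_pos k e" "k \<in> pos y" "e \<in> Field \<gamma>"
    using word_iso_byD(4)[OF f g0] Field_wpow[OF y \<gamma>] by blast
  obtain m where m: "m \<in> pos y" "\<And>a. a \<in> pos y \<Longrightarrow> (m, a) \<in> fst y"
    using Well_order_minE[OF y] ke(2) by blast
  obtain e0 where e0: "e0 \<in> Field \<gamma>" "\<And>a. a \<in> Field \<gamma> \<Longrightarrow> (e0, a) \<in> \<gamma>"
    using Well_order_minE[OF \<gamma>] ke(3) by blast
  note e_last = last_copy_if_suffixes_greater[OF W y \<gamma> f m g0 ke(1) after_g0]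
  have "ord_eq \<gamma> ord_one \<and> word_iso y W"
  proof (cases "Field \<gamma> = {e0}")
    case True
    then have "word_iso ?Y y" using wpow_singleton[OF y \<gamma> e0(1)] Restr_Field[of \<gamma>] by simp
    then show ?thesis using ord_eq_ord_one[OF \<gamma> True] word_iso_sym word_iso_trans iso by blast
  next
    case False
    then obtain e1 where "e1 \<in> Field \<gamma>" "e1 \<noteq> e0" using e0(1) by blast
    then have "e \<noteq> e0" using e_last e0(2) by blast
    have mem: "pow_pos m e \<in> pos ?Y" "pow_pos m e0 \<in> pos ?Y" using m(1) ke(3) e0(1) y \<gamma> by simp_all
    obtain g where g: "g \<in> pos W" "f g = pow_pos m e"
      using mem(1) word_iso_byD(6)[OF f] by (metis imageE)
    obtain i where i: "i \<in> pos W" "f i = pow_pos m e0"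
      using mem(2) word_iso_byD(6)[OF f] by (metis imageE)
    have "(f i, f g) \<in> fst ?Y" "f i \<noteq> f g"
      using i(2) g(2) e0 ke(3) \<open>e \<noteq> e0\<close> m(1) by auto
    then have "(i, g) \<in> fst W" "i \<noteq> g" using word_iso_byD(2)[OF f i(1) g(1)] by auto
    then have alt: "pos_str_less W (?suffix g) \<or> word_iso W (?suffix g)"
      using suffixes[OF g(1) i(1)] by blast
    have "above \<gamma> e = {e}" using e_last Well_order_refl[OF \<gamma> ke(3)] unfolding above_def by auto
    then have "word_iso (?suffix g) (wpow y (Restr \<gamma> {e}))"
      using word_iso_by_suffix_at_copy[OF W y \<gamma> f m g ke(3)] by simp
    then have suffix_y: "word_iso (?suffix g) y"
      using word_iso_trans wpow_singleton[OF y \<gamma> ke(3)] by blast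
    have y_prefix_W: "pos_prefix y W"
      using pos_prefix_word_iso_r[OF Well_order_wpow[OF y \<gamma>] word_iso_sym[OF iso] pos_prefix_base_wpow[OF y \<gamma> e0(1)]] .
    from alt show ?thesis
    proof
      assume "pos_str_less W (?suffix g)"
      then have "pos_str_less W y"
        using pos_str_less_word_iso[OF W Well_order_restr_word[OF W] _ word_iso_refl suffix_y]
          by blast
      then show ?thesis using pos_str_less_not_pos_prefix[OF W y _ y_prefix_W] by blast
    next
      assume "word_iso W (?suffix g)"
      then have "word_iso ?Y y"
        using word_iso_trans[OF word_iso_sym[OF iso] word_iso_trans[OF _ suffix_y]] by blast
      then show ?thesis using wpow_not_word_iso_base[OF y _ \<gamma> e0 ke(3) \<open>e \<noteq> e0\<close>] m(1) by blast
    qed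
  qed
  then show "ord_eq \<gamma> ord_one" "word_iso y W" by blast+
qed

lemma conc_wpow_decomp:
  assumes u: "wo_word u" and \<alpha>: "Well_order \<alpha>" and \<eta>: "Well_order \<eta>" and x: "wo_word x"
    and v_decomp: "word_iso v (conc (wpow u \<eta>) x)" and t: "wo_word t"
    and tail: "word_iso z (conc v t)"
  shows "word_iso (conc (wpow u \<alpha>) z) (conc (wpow u (rsum \<alpha> \<eta>)) (conc x t))"
proof -
  have "word_iso (conc (wpow u \<alpha>) z) (conc (wpow u \<alpha>) (conc (conc (wpow u \<eta>) x) t))"
    using word_iso_conc_r[OF word_iso_trans[OF tail word_iso_conc_l[OF v_decomp]]] .
  also have "word_iso \<dots> (conc (conc (wpow u \<alpha>) (wpow u \<eta>)) (conc x t))"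
    using word_iso_trans[OF word_iso_conc_r[OF conc_assoc] word_iso_sym[OF conc_assoc]] .
  also have "word_iso \<dots> (conc (wpow u (rsum \<alpha> \<eta>)) (conc x t))"
    using word_iso_conc_l[OF conc_wpow_rsum[OF u \<alpha> \<eta>]] .
  finally show ?thesis .
qed

lemma wpow_tail:
  assumes v: "wo_word v" and \<beta>: "Well_order \<beta>" and "Field \<beta> \<noteq> {}"
  obtains t where "wo_word t" "word_iso (wpow v \<beta>) (conc v t)"
proof -
  obtain c0 where "c0 \<in> Field \<beta>" "\<And>c. c \<in> Field \<beta> \<Longrightarrow> (c0, c) \<in> \<beta>"
    using Well_order_minE[OF \<beta> assms(3)] by blast
  then show ?thesis using that[OF Well_order_wpow[OF v Well_order_Restr[OF \<beta>]] wpow_unfold[OF v \<beta>]]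
    by blast
qed

lemma conc_wpow_absorb:
  assumes u: "wo_word u" and v: "wo_word v" and \<alpha>: "Well_order \<alpha>"
    and \<beta>: "Well_order \<beta>" and \<beta>_ne: "Field \<beta> \<noteq> {}"
    and \<eta>: "Well_order \<eta>" and x: "wo_word x" and v_decomp: "word_iso v (conc (wpow u \<eta>) x)"
    and absorb: "\<eta> =o rsum \<alpha> \<eta>"
  shows "word_iso (conc (wpow u \<alpha>) (wpow v \<beta>)) (wpow v \<beta>)"
proof -
  obtain t where t: "wo_word t" "word_iso (wpow v \<beta>) (conc v t)" using wpow_tail[OF v \<beta> \<beta>_ne] .
  have "word_iso (conc (wpow u \<alpha>) (wpow v \<beta>)) (conc (wpow u (rsum \<alpha> \<eta>)) (conc x t))"
    using conc_wpow_decomp[OF u \<alpha> \<eta> x v_decomp t] .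
  also have "word_iso \<dots> (conc (wpow u \<eta>) (conc x t))"
    using word_iso_conc_l[OF wpow_ordIso[OF u ordIso_symmetric[OF absorb]]] .
  also have "word_iso \<dots> (conc v t)"
    using word_iso_trans[OF word_iso_sym[OF conc_assoc] word_iso_conc_l[OF word_iso_sym[OF v_decomp]]] .
  also have "word_iso \<dots> (wpow v \<beta>)" using word_iso_sym[OF t(2)] .
  finally show ?thesis .
qed

lemma conc_wpow_singleton_aboveS:
  assumes u: "wo_word u" and \<alpha>: "Well_order \<alpha>" and b: "b \<in> Field \<alpha>"
  shows "word_iso (conc (wpow u (Restr \<alpha> {b})) (wpow u (Restr \<alpha> (aboveS \<alpha> b))))
      (wpow u (Restr \<alpha> (above \<alpha> b)))"
proof -
  have "{b} \<union> aboveS \<alpha> b = above \<alpha> b"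
    unfolding above_def aboveS_def using Well_order_refl[OF \<alpha> b] by auto
  moreover have "aboveS \<alpha> b \<subseteq> Field \<alpha>" unfolding aboveS_def by (auto intro: FieldI2)
  then have "word_iso (conc (wpow u (Restr \<alpha> {b})) (wpow u (Restr \<alpha> (aboveS \<alpha> b))))
      (wpow u (Restr \<alpha> ({b} \<union> aboveS \<alpha> b)))"
    by (intro conc_wpow_Restr[OF u \<alpha>]) (use b in \<open>auto simp: aboveS_def\<close>)
  ultimately show ?thesis by simp
qed

section \<open>Products of powers of prime words\<close>

context
  fixes u v x :: "'a::linorder word" and \<alpha> \<beta> \<eta> :: "nat rel"
  assumes prime_u: "prime_word u" and prime_v: "prime_word v"
    and \<alpha>: "Well_order \<alpha>" and \<alpha>_ne: "Field \<alpha> \<noteq> {}" and \<beta>: "Well_order \<beta>" and \<beta>_ne: "Field \<beta> \<noteq> {}"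
    and \<eta>: "Well_order \<eta>" and x: "wo_word x"
    and v_decomp: "word_iso v (conc (wpow u \<eta>) x)" and u_less_x: "pos_str_less u x"
    and \<eta>_less: "\<eta> <o rsum \<alpha> \<eta>"
begin

private lemma u_word: "wo_word u"
  using prime_word_wo[OF prime_u] .

private lemma v_word: "wo_word v"
  using prime_word_wo[OF prime_v] .

private lemma W_word: "wo_word (conc (wpow u \<alpha>) (wpow v \<beta>))"
  using Well_order_conc[OF Well_order_wpow[OF u_word \<alpha>] Well_order_wpow[OF v_word \<beta>]] .

private lemma wo_conc_wpow_x: "Well_order \<rho> \<Longrightarrow> wo_word t \<Longrightarrow> wo_word (conc (wpow u \<rho>) (conc x t))"
  using Well_order_conc[OF Well_order_wpow[OF u_word] Well_order_conc[OF x]] by blast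

lemma pos_str_less_conc_v:
  assumes t': "wo_word t'" shows "pos_str_less (conc (wpow u \<alpha>) (wpow v \<beta>)) (conc v t')"
proof -
  obtain t where t: "wo_word t" "word_iso (wpow v \<beta>) (conc v t)" using wpow_tail[OF v_word \<beta> \<beta>_ne] .
  have R: "Well_order (rsum \<alpha> \<eta>)" using Well_order_rsum[OF \<alpha> \<eta>] .
  have "pos_str_less (conc (wpow u (rsum \<alpha> \<eta>)) (conc x t)) (conc (wpow u \<eta>) (conc x t'))"
    using pos_str_less_wpow_ordLess[OF u_word x t(1) t' u_less_x R \<eta>_less] .
  moreover have "word_iso (conc (wpow u (rsum \<alpha> \<eta>)) (conc x t)) (conc (wpow u \<alpha>) (wpow v \<beta>))"
    using word_iso_sym[OF conc_wpow_decomp[OF u_word \<alpha> \<eta> x v_decomp t]] .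
  moreover have "word_iso (conc (wpow u \<eta>) (conc x t')) (conc v t')"
    using word_iso_sym[OF word_iso_trans[OF word_iso_conc_l[OF v_decomp] conc_assoc]] .
  ultimately show ?thesis
    using pos_str_less_word_iso[OF wo_conc_wpow_x[OF R t(1)] wo_conc_wpow_x[OF \<eta> t']] by blast
qed

lemma pos_str_less_v: "pos_str_less (conc (wpow u \<alpha>) (wpow v \<beta>)) v"
proof -
  have e: "wo_word empty_word" by (simp add: Well_order_empty)
  show ?thesis
    using pos_str_less_word_iso[OF W_word Well_order_conc[OF v_word e] pos_str_less_conc_v[OF e]
        word_iso_refl conc_empty_r[of empty_word v]] by simp
qed

lemma pos_str_less_or_word_iso_Restr_above:
  assumes b: "b \<in> Field \<alpha>"
  defines "Z \<equiv> conc (wpow u (Restr \<alpha> (above \<alpha> b))) (wpow v \<beta>)"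
  shows "pos_str_less (conc (wpow u \<alpha>) (wpow v \<beta>)) Z \<or> word_iso (conc (wpow u \<alpha>) (wpow v \<beta>)) Z"
proof -
  let ?R = "rsum \<alpha> \<eta>" and ?S = "inl_pos ` above \<alpha> b \<union> inr_pos ` Field \<eta>"
  obtain t where t: "wo_word t" "word_iso (wpow v \<beta>) (conc v t)" using wpow_tail[OF v_word \<beta> \<beta>_ne] .
  have R: "Well_order ?R" using Well_order_rsum[OF \<alpha> \<eta>] .
  have W_decomp: "word_iso (conc (wpow u \<alpha>) (wpow v \<beta>)) (conc (wpow u ?R) (conc x t))"
    using conc_wpow_decomp[OF u_word \<alpha> \<eta> x v_decomp t] .
  have "word_iso Z (conc (wpow u (rsum (Restr \<alpha> (above \<alpha> b)) \<eta>)) (conc x t))"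
    unfolding Z_def by (rule conc_wpow_decomp[OF u_word Well_order_Restr[OF \<alpha>] \<eta> x v_decomp t])
  then have Z_decomp: "word_iso Z (conc (wpow u (Restr ?R ?S)) (conc x t))"
    using rsum_Restr[OF \<alpha> above_Field \<eta>] by simp
  have "?S \<subseteq> Field ?R" unfolding Field_rsum using above_Field[of \<alpha> b] by blast
  then consider "Restr ?R ?S =o ?R" | "Restr ?R ?S <o ?R"
    using Restr_ordLeq[OF R] ordLeq_iff_ordLess_or_ordIso by metis
  then show ?thesis
  proof cases
    case 1
    have "word_iso Z (conc (wpow u \<alpha>) (wpow v \<beta>))"
      using word_iso_trans[OF Z_decomp word_iso_trans[OF word_iso_conc_l[OF wpow_ordIso[OF u_word 1]]
            word_iso_sym[OF W_decomp]]] .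
    then show ?thesis using word_iso_sym by blast
  next
    case 2
    have "pos_str_less (conc (wpow u ?R) (conc x t)) (conc (wpow u (Restr ?R ?S)) (conc x t))"
      using pos_str_less_wpow_ordLess[OF u_word x t(1) t(1) u_less_x R 2] .
    then show ?thesis
      using pos_str_less_word_iso[OF wo_conc_wpow_x[OF R t(1)] wo_conc_wpow_x[OF Well_order_Restr[OF R] t(1)]
          _ word_iso_sym[OF W_decomp] word_iso_sym[OF Z_decomp]] by blast
  qed
qed

lemma pos_str_less_suffix_inr:
  assumes n: "inr_pos n \<in> pos (conc (wpow u \<alpha>) (wpow v \<beta>))"
  shows "pos_str_less (conc (wpow u \<alpha>) (wpow v \<beta>))
    (restr_word (conc (wpow u \<alpha>) (wpow v \<beta>)) (above (fst (conc (wpow u \<alpha>) (wpow v \<beta>))) (inr_pos n)))"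
proof -
  obtain j c where jc: "n = pow_pos j c" "j \<in> pos v" "c \<in> Field \<beta>"
    using n Field_wpow[OF v_word \<beta>] unfolding pos_conc by auto
  let ?s = "restr_word v (above (fst v) j)" and ?t = "wpow v (Restr \<beta> (aboveS \<beta> c))"
  have s: "wo_word ?s" and t: "wo_word ?t"
    using Well_order_restr_word[OF v_word] Well_order_wpow[OF v_word Well_order_Restr[OF \<beta>]] .
  have z: "wo_word (conc ?s ?t)" using Well_order_conc[OF s t] .
  have suffix: "word_iso
      (restr_word (conc (wpow u \<alpha>) (wpow v \<beta>)) (above (fst (conc (wpow u \<alpha>) (wpow v \<beta>))) (inr_pos n)))
      (conc ?s ?t)"
    using word_iso_trans[OF restr_word_conc_above_inr[OF Well_order_wpow[OF u_word \<alpha>] Well_order_wpow[OF v_word \<beta>]]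
        wpow_final[OF v_word \<beta> jc(2,3), folded jc(1)]] .
  from prime_word_suffix_cases[OF prime_v jc(2)]
  have "pos_str_less (conc (wpow u \<alpha>) (wpow v \<beta>)) (conc ?s ?t)"
  proof
    assume "pos_str_less v ?s"
    then have "pos_str_less v (conc ?s ?t)"
      using pos_str_less_pos_prefix_r[OF v_word s z _ pos_prefix_conc[OF s t]] by blast
    then show ?thesis using pos_str_less_trans[OF W_word v_word z pos_str_less_v] by blast
  next
    assume "word_iso ?s v"
    then show ?thesis
      using pos_str_less_word_iso[OF W_word Well_order_conc[OF v_word t] pos_str_less_conc_v[OF t]
          word_iso_refl word_iso_conc_l[OF word_iso_sym]] by blast
  qed
  then show ?thesis
    using pos_str_less_word_iso[OF W_word z _ word_iso_refl word_iso_sym[OF suffix]] by blast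
qed

lemma pos_str_less_or_word_iso_suffix_inl:
  assumes n: "inl_pos n \<in> pos (conc (wpow u \<alpha>) (wpow v \<beta>))"
  defines "S \<equiv> restr_word (conc (wpow u \<alpha>) (wpow v \<beta>)) (above (fst (conc (wpow u \<alpha>) (wpow v \<beta>)))
      (inl_pos n))"
  shows "pos_str_less (conc (wpow u \<alpha>) (wpow v \<beta>)) S \<or> word_iso (conc (wpow u \<alpha>) (wpow v \<beta>)) S"
proof -
  obtain i b where ib: "n = pow_pos i b" "i \<in> pos u" "b \<in> Field \<alpha>"
    using n Field_wpow[OF u_word \<alpha>] unfolding pos_conc by auto
  let ?s = "restr_word u (above (fst u) i)" and ?t = "wpow u (Restr \<alpha> (aboveS \<alpha> b))"
  let ?z = "conc (conc ?s ?t) (wpow v \<beta>)"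
  have s: "wo_word ?s" and t: "wo_word ?t"
    using Well_order_restr_word[OF u_word] Well_order_wpow[OF u_word Well_order_Restr[OF \<alpha>]] .
  have st: "wo_word (conc ?s ?t)" using Well_order_conc[OF s t] .
  have z: "wo_word ?z" using Well_order_conc[OF st Well_order_wpow[OF v_word \<beta>]] .
  have "n \<in> pos (wpow u \<alpha>)" using n unfolding pos_conc by auto
  then have S_z: "word_iso S ?z" unfolding S_def
    using restr_word_conc_above_inl[OF Well_order_wpow[OF u_word \<alpha>] Well_order_wpow[OF v_word \<beta>]]
      word_iso_conc_l[OF wpow_final[OF u_word \<alpha> ib(2,3), folded ib(1)]] by simp
  from prime_word_suffix_cases[OF prime_u ib(2)]
  have "pos_str_less (conc (wpow u \<alpha>) (wpow v \<beta>)) ?z \<or> word_iso (conc (wpow u \<alpha>) (wpow v \<beta>)) ?z"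
  proof
    assume u_less: "pos_str_less u ?s"
    have u_prefix: "pos_prefix u (conc (wpow u \<alpha>) (wpow v \<beta>))"
      using pos_prefix_trans[OF Well_order_wpow[OF u_word \<alpha>] W_word pos_prefix_base_wpow[OF u_word \<alpha> ib(3)]
          pos_prefix_conc[OF Well_order_wpow[OF u_word \<alpha>] Well_order_wpow[OF v_word \<beta>]]] .
    have "pos_prefix ?s ?z"
      using pos_prefix_trans[OF st z pos_prefix_conc[OF s t] pos_prefix_conc[OF st Well_order_wpow[OF v_word \<beta>]]] .
    then show ?thesis
      using pos_str_less_pos_prefix_r[OF W_word s z pos_str_less_pos_prefix_l[OF u_word s W_word u_less u_prefix]]
        by blast
  next
    assume s_u: "word_iso ?s u"
    let ?Z = "conc (wpow u (Restr \<alpha> (above \<alpha> b))) (wpow v \<beta>)"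
    have "word_iso (conc (wpow u (Restr \<alpha> {b})) ?t) (wpow u (Restr \<alpha> (above \<alpha> b)))"
      using conc_wpow_singleton_aboveS[OF u_word \<alpha> ib(3)] .
    then have z_Z: "word_iso ?z ?Z"
      using word_iso_conc_l[OF word_iso_trans[OF word_iso_conc_l[OF word_iso_trans[OF s_u
              word_iso_sym[OF wpow_singleton[OF u_word \<alpha> ib(3)]]]]]] by blast
    have Z: "wo_word ?Z"
      using Well_order_conc[OF Well_order_wpow[OF u_word Well_order_Restr[OF \<alpha>]] Well_order_wpow[OF v_word \<beta>]] .
    from pos_str_less_or_word_iso_Restr_above[OF ib(3)] show ?thesis
      using pos_str_less_word_iso[OF W_word Z _ word_iso_refl word_iso_sym[OF z_Z]]
        word_iso_trans[OF _ word_iso_sym[OF z_Z]] by blast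
  qed
  then show ?thesis
    using pos_str_less_word_iso[OF W_word z _ word_iso_refl word_iso_sym[OF S_z]]
      word_iso_trans[OF _ word_iso_sym[OF S_z]] by blast
qed

lemma prime_word_conc_wpow: "prime_word (conc (wpow u \<alpha>) (wpow v \<beta>))"
proof -
  obtain m where m: "m \<in> pos v" "\<And>a. a \<in> pos v \<Longrightarrow> (m, a) \<in> fst v"
    using Well_order_minE[OF v_word primitive_nonempty[OF prime_word_primitive[OF prime_v]]]
      by blast
  obtain c0 where c0: "c0 \<in> Field \<beta>" using \<beta>_ne by blast
  let ?g0 = "inr_pos (pow_pos m c0)"
  have g0: "?g0 \<in> pos (conc (wpow u \<alpha>) (wpow v \<beta>))" using m(1) c0 v_word \<beta> by (simp add: Field_rsum)
  have suffixes: "pos_str_less (conc (wpow u \<alpha>) (wpow v \<beta>)) (restr_word (conc (wpow u \<alpha>) (wpow v \<beta>))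
      (above (fst (conc (wpow u \<alpha>) (wpow v \<beta>))) g))
      \<or> word_iso (conc (wpow u \<alpha>) (wpow v \<beta>)) (restr_word (conc (wpow u \<alpha>) (wpow v \<beta>)) (above (fst (conc (wpow u \<alpha>) (wpow v \<beta>))) g))" if "g \<in> pos (conc (wpow u \<alpha>) (wpow v \<beta>))" for g
    by (cases g rule: sum_code_cases)
      (use that pos_str_less_or_word_iso_suffix_inl pos_str_less_suffix_inr in blast)+
  have after_g0: "pos_str_less (conc (wpow u \<alpha>) (wpow v \<beta>)) (restr_word (conc (wpow u \<alpha>) (wpow v \<beta>))
      (above (fst (conc (wpow u \<alpha>) (wpow v \<beta>))) g))"
    if "g \<in> pos (conc (wpow u \<alpha>) (wpow v \<beta>))" "(?g0, g) \<in> fst (conc (wpow u \<alpha>) (wpow v \<beta>))" for g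
    by (cases g rule: sum_code_cases) (use that pos_str_less_suffix_inr in auto)
  have "primitive (conc (wpow u \<alpha>) (wpow v \<beta>))"
    using primitive_if_suffixes[OF W_word g0 suffixes after_g0] by blast
  moreover have "lex_le (conc (wpow u \<alpha>) (wpow v \<beta>)) z"
    if z: "proper_suffix z (conc (wpow u \<alpha>) (wpow v \<beta>))" for z
  proof -
    obtain g i where g: "g \<in> pos (conc (wpow u \<alpha>) (wpow v \<beta>))"
      "i \<in> pos (conc (wpow u \<alpha>) (wpow v \<beta>))" "(i, g) \<in> fst (conc (wpow u \<alpha>) (wpow v \<beta>))" "i \<noteq> g"
      and z: "word_iso z (restr_word (conc (wpow u \<alpha>) (wpow v \<beta>))
        (above (fst (conc (wpow u \<alpha>) (wpow v \<beta>))) g))"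
      using z by (rule proper_suffixE)
    have "lex_le (conc (wpow u \<alpha>) (wpow v \<beta>)) (restr_word (conc (wpow u \<alpha>) (wpow v \<beta>))
        (above (fst (conc (wpow u \<alpha>) (wpow v \<beta>))) g))"
      using suffixes[OF g(1)] lex_le_iff[OF W_word Well_order_restr_word[OF W_word]]
        unfolding pos_prefix_def by blast
    then show ?thesis using lex_le_word_iso_r word_iso_sym[OF z] by blast
  qed
  ultimately show ?thesis unfolding prime_word_def by blast
qed

end

lemma ordLeq_rsum_right:
  assumes \<alpha>: "Well_order \<alpha>" and \<eta>: "Well_order \<eta>" shows "\<eta> \<le>o rsum \<alpha> \<eta>"
  using ordIso_ordLeq_trans[OF ordIso_Restr_rsum_inr[OF \<alpha> \<eta>]
      Restr_ordLeq[OF Well_order_rsum[OF \<alpha> \<eta>]]] Field_rsum by blast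

lemma conc_wpow_word_iso_base:
  assumes u: "wo_word u" and v: "wo_word v" and \<alpha>: "Well_order \<alpha>" and \<beta>: "Well_order \<beta>"
    and uv: "word_iso u v"
  shows "word_iso (conc (wpow u \<alpha>) (wpow v \<beta>)) (wpow v (ord_add \<alpha> \<beta>))"
  unfolding ord_add_def
  using word_iso_trans[OF word_iso_conc_l[OF word_iso_wpow[OF u v uv ordIso_reflexive[OF \<alpha>]]] conc_wpow_rsum[OF v \<alpha> \<beta>]] .

lemma ord_eq_refl: "ord_eq \<alpha> \<alpha>"
  unfolding ord_eq_def by (rule word_iso_refl)

lemma conc_wpow_absorb_or_prime:
  assumes pu: "prime_word u" and pv: "prime_word v"
    and \<alpha>: "Well_order \<alpha>" and \<alpha>_ne: "Field \<alpha> \<noteq> {}" and \<beta>: "Well_order \<beta>" and \<beta>_ne: "Field \<beta> \<noteq> {}"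
    and \<eta>: "Well_order \<eta>" and x: "wo_word x"
    and v_decomp: "word_iso v (conc (wpow u \<eta>) x)" and u_less_x: "pos_str_less u x"
  shows "word_iso (conc (wpow u \<alpha>) (wpow v \<beta>)) (wpow v \<beta>) \<or> prime_word (conc (wpow u \<alpha>) (wpow v \<beta>))"
proof -
  have "\<eta> =o rsum \<alpha> \<eta> \<or> \<eta> <o rsum \<alpha> \<eta>"
    using ordLeq_rsum_right[OF \<alpha> \<eta>] ordLeq_iff_ordLess_or_ordIso by blast
  then show ?thesis
    using conc_wpow_absorb[OF prime_word_wo[OF pu] prime_word_wo[OF pv] \<alpha> \<beta> \<beta>_ne \<eta> x v_decomp]
      prime_word_conc_wpow[OF pu pv \<alpha> \<alpha>_ne \<beta> \<beta>_ne \<eta> x v_decomp u_less_x] by blast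
qed

theorem mainTheorem15:
  fixes u v :: "'a::{finite, linorder} word" and \<alpha> \<beta> :: "nat rel"
  assumes "prime_word u" and "prime_word v" and "lex_le u v"
    and "is_ord \<alpha>" and "Field \<alpha> \<noteq> {}" and "is_ord \<beta>" and "Field \<beta> \<noteq> {}"
  shows "\<exists>w \<gamma>. prime_word w \<and> is_ord \<gamma> \<and>
     word_iso (conc (wpow u \<alpha>) (wpow v \<beta>)) (wpow w \<gamma>) \<and>
     ((word_iso w v \<and> (ord_eq \<gamma> \<beta> \<or> ord_eq \<gamma> (ord_add \<alpha> \<beta>))) \<or>
      (word_iso w (conc (wpow u \<alpha>) (wpow v \<beta>)) \<and> ord_eq \<gamma> ord_one))"
proof -
  have \<alpha>: "Well_order \<alpha>" and \<beta>: "Well_order \<beta>" using assms(4,6) unfolding is_ord_def .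
  have u: "wo_word u" and v: "wo_word v" using prime_word_wo assms(1,2) by blast+
  show ?thesis
  proof (cases "word_iso u v")
    case True
    have "is_ord (ord_add \<alpha> \<beta>)" unfolding is_ord_def ord_add_def using Well_order_rsum[OF \<alpha> \<beta>] .
    then show ?thesis
      using conc_wpow_word_iso_base[OF u v \<alpha> \<beta> True] assms(2) ord_eq_refl word_iso_refl by blast
  next
    case False
    then obtain \<eta> x where "Well_order \<eta>" "wo_word x" "word_iso v (conc (wpow u \<eta>) x)"
      "pos_str_less u x"
      using prime_lex_less_decomp[OF assms(1-3)] by blast
    then consider "word_iso (conc (wpow u \<alpha>) (wpow v \<beta>)) (wpow v \<beta>)"
      | "prime_word (conc (wpow u \<alpha>) (wpow v \<beta>))"
      using conc_wpow_absorb_or_prime[OF assms(1,2) \<alpha> assms(5) \<beta> assms(7)] by blast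
    then show ?thesis
    proof cases
      case 1
      then show ?thesis using assms(2,6) ord_eq_refl word_iso_refl by blast
    next
      case 2
      moreover have "is_ord ord_one" unfolding is_ord_def by (rule Well_order_ord_one)
      ultimately show ?thesis
        using word_iso_sym[OF wpow_ord_one[OF prime_word_wo[OF 2]]] ord_eq_refl word_iso_refl
          by blast
    qed
  qed
qed

end
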